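(* (i) Let $I,J$ be sets and $R\colon I\times J\to[0,1]$ a fuzzy relation. Then the mappings $f_R\colon[0,1]^I\to[0,1]^J$ and $g_R\colon[0,1]^J\to[0,1]^I$ satisfy $f_R\leftrightarrows g_R$ (as maps between the power Pavelka algebras $[0,1]^I$ and $[0,1]^J$). (ii) Let $\mathbf A$ and $\mathbf B$ be semisimple Pavelka algebras and let $f\colon A\to B$, $g\colon B\to A$ satisfy $f\leftrightarrows g$. Then there exists a fuzzy relation $R\colon \mathrm{Spec_M}\mathbf A\times\mathrm{Spec_M}\mathbf B\to[0,1]$ (namely $R(F,G)=\bigwedge_{a\in A}(f(a)/G\rightarrow a/F)$) such that $n_{\mathbf B}(f(x))=f_R(n_{\mathbf A}(x))$ for all $x\in A$ and $n_{\mathbf A}(g(y))=g_R(n_{\mathbf B}(y))$ for all $y\in B$, where $f_R,g_R$ are taken with $I=\mathrm{Spec_M}\mathbf A$, $J=\mathrm{Spec_M}\mathbf B$.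
   Context: An MV-algebra $(A;\oplus,\neg,0)$ carries derived operations $1=\neg0$, $x\cdot y=\neg(\neg x\oplus\neg y)$, $x\rightarrow y=\neg x\oplus y$, $x\vee y=\neg(\neg x\oplus y)\oplus y$, $x\wedge y=\neg(\neg x\vee\neg y)$, and order $x\le y$ iff $\neg x\oplus y=1$. The standard MV-algebra is $[0,1]$ with $x\oplus y=\min\{x+y,1\}$, $\neg x=1-x$ (so $x\cdot y=\max\{0,x+y-1\}$, $x\rightarrow y=\min\{1,1-x+y\}$). A Pavelka algebra is $\mathbf A=(A;\oplus,\neg,\{\mathbf r\mid r\in[0,1]\cap\mathbb Q\})$ with $(A;\oplus,\neg,\mathbf 0)$ an MV-algebra, $\mathbf r\oplus\mathbf s=\mathbf t$ whenever $\min\{r+s,1\}=t$, and $\neg\mathbf r=\mathbf s$ whenever $1-r=s$. The standard Pavelka algebra is $[0,1]$ with $\mathbf r$ interpreted as $r$; $[0,1]^I$ is its power (componentwise, constants diagonal). A filter of a Pavelka algebra is a filter of its MV-reduct (a nonempty up-set closed under $\cdot$); a maximal filter is a maximal proper filter; $\mathrm{Spec_M}\mathbf A$ is the set of maximal filters. For $F\in\mathrm{Spec_M}\mathbf A$ the quotient $\mathbf A/F$ embeds uniquely into the standard Pavelka algebra and $x/F$ is identified with its image in $[0,1]$. $\mathbf A$ is semisimple if its MV-reduct is a subdirect product of simple MV-algebras. The natural embedding is $n_{\mathbf A}\colon A\to[0,1]^{\mathrm{Spec_M}\mathbf A}$, $n_{\mathbf A}(x)(F)=x/F$. For Pavelka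 algebras $\mathbf A,\mathbf B$ and maps $f\colon A\to B$, $g\colon B\to A$: $f\leftrightarrows g$ ($f$ is a strong left adjoint of $g$) means that $f,g$ are monotone, $x\le f(y)$ iff $g(x)\le y$ for all $y\in A$, $x\in B$, and $\mathbf r\rightarrow f(x)=f(\mathbf r\rightarrow x)$ for all $x\in A$ and all constants $\mathbf r$ (equivalently $\mathbf r\cdot g(y)=g(\mathbf r\cdot y)$ for all $y\in B$ and constants $\mathbf r$). For $R\colon I\times J\to[0,1]$: $f_R(x)(j)=\bigwedge_{i\in I}(R(i,j)\rightarrow x(i))$ for $x\in[0,1]^I$, $j\in J$; $g_R(y)(i)=\bigvee_{j\in J}(R(i,j)\cdot y(j))$ for $y\in[0,1]^J$, $i\in I$ (operations of the standard MV-algebra). *)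

theory Defs
  imports Complex_Main "HOL-Library.FuncSet"
begin

record 'a pav =
  pcar :: "'a set"
  padd :: "'a \<Rightarrow> 'a \<Rightarrow> 'a"
  pneg :: "'a \<Rightarrow> 'a"
  pcst :: "rat \<Rightarrow> 'a"

definition mv_algebra :: "'a set \<Rightarrow> ('a \<Rightarrow> 'a \<Rightarrow> 'a) \<Rightarrow> ('a \<Rightarrow> 'a) \<Rightarrow> 'a \<Rightarrow> bool" where
  "mv_algebra S pl ng z \<longleftrightarrow>
     z \<in> S \<and> (\<forall>x\<in>S. \<forall>y\<in>S. pl x y \<in> S) \<and> (\<forall>x\<in>S. ng x \<in> S) \<and>
     (\<forall>x\<in>S. \<forall>y\<in>S. \<forall>w\<in>S. pl x (pl y w) = pl (pl x y) w) \<and>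
     (\<forall>x\<in>S. \<forall>y\<in>S. pl x y = pl y x) \<and>
     (\<forall>x\<in>S. pl x z = x) \<and>
     (\<forall>x\<in>S. ng (ng x) = x) \<and>
     (\<forall>x\<in>S. pl x (ng z) = ng z) \<and>
     (\<forall>x\<in>S. \<forall>y\<in>S. pl (ng (pl (ng x) y)) y = pl (ng (pl (ng y) x)) x)"

definition mv_mult :: "('a \<Rightarrow> 'a \<Rightarrow> 'a) \<Rightarrow> ('a \<Rightarrow> 'a) \<Rightarrow> 'a \<Rightarrow> 'a \<Rightarrow> 'a" where
  "mv_mult pl ng x y = ng (pl (ng x) (ng y))"

definition mv_imp :: "('a \<Rightarrow> 'a \<Rightarrow> 'a) \<Rightarrow> ('a \<Rightarrow> 'a) \<Rightarrow> 'a \<Rightarrow> 'a \<Rightarrow> 'a" where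
  "mv_imp pl ng x y = pl (ng x) y"

definition mv_le :: "('a \<Rightarrow> 'a \<Rightarrow> 'a) \<Rightarrow> ('a \<Rightarrow> 'a) \<Rightarrow> 'a \<Rightarrow> 'a \<Rightarrow> 'a \<Rightarrow> bool" where
  "mv_le pl ng z x y \<longleftrightarrow> pl (ng x) y = ng z"

definition mv_filter :: "'a set \<Rightarrow> ('a \<Rightarrow> 'a \<Rightarrow> 'a) \<Rightarrow> ('a \<Rightarrow> 'a) \<Rightarrow> 'a \<Rightarrow> 'a set \<Rightarrow> bool" where
  "mv_filter S pl ng z F \<longleftrightarrow>
     F \<subseteq> S \<and> F \<noteq> {} \<and>
     (\<forall>x\<in>F. \<forall>y\<in>S. mv_le pl ng z x y \<longrightarrow> y \<in> F) \<and>
     (\<forall>x\<in>F. \<forall>y\<in>F. mv_mult pl ng x y \<in> F)"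

definition mv_simple :: "'a set \<Rightarrow> ('a \<Rightarrow> 'a \<Rightarrow> 'a) \<Rightarrow> ('a \<Rightarrow> 'a) \<Rightarrow> 'a \<Rightarrow> bool" where
  "mv_simple S pl ng z \<longleftrightarrow> mv_algebra S pl ng z \<and> z \<noteq> ng z \<and>
     (\<forall>F. mv_filter S pl ng z F \<longrightarrow> F = {ng z} \<or> F = S)"

definition mv_hom :: "'a set \<Rightarrow> ('a \<Rightarrow> 'a \<Rightarrow> 'a) \<Rightarrow> ('a \<Rightarrow> 'a) \<Rightarrow> 'a \<Rightarrow>
    'b set \<Rightarrow> ('b \<Rightarrow> 'b \<Rightarrow> 'b) \<Rightarrow> ('b \<Rightarrow> 'b) \<Rightarrow> 'b \<Rightarrow> ('a \<Rightarrow> 'b) \<Rightarrow> bool" where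
  "mv_hom S pl ng z T pl' ng' z' h \<longleftrightarrow>
     (\<forall>x\<in>S. h x \<in> T) \<and> (\<forall>x\<in>S. \<forall>y\<in>S. h (pl x y) = pl' (h x) (h y)) \<and>
     (\<forall>x\<in>S. h (ng x) = ng' (h x)) \<and> h z = z'"

text \<open>The MV-algebra (S,pl,ng,z) is a subdirect product of the simple MV-algebras
  (T i, pl' i, ng' i, z' i), i in I, via the embedding x |-> (h i x)_i: each h i is a
  surjective homomorphism (the projections) and the family is jointly injective.\<close>
definition mv_subdirect_simple :: "'a set \<Rightarrow> ('a \<Rightarrow> 'a \<Rightarrow> 'a) \<Rightarrow> ('a \<Rightarrow> 'a) \<Rightarrow> 'a \<Rightarrow>
    'i set \<Rightarrow> ('i \<Rightarrow> 'b set) \<Rightarrow> ('i \<Rightarrow> 'b \<Rightarrow> 'b \<Rightarrow> 'b) \<Rightarrow> ('i \<Rightarrow> 'b \<Rightarrow> 'b) \<Rightarrow> ('i \<Rightarrow> 'b) \<Rightarrow>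
    ('i \<Rightarrow> 'a \<Rightarrow> 'b) \<Rightarrow> bool" where
  "mv_subdirect_simple S pl ng z I T pl' ng' z' h \<longleftrightarrow>
     (\<forall>i\<in>I. mv_simple (T i) (pl' i) (ng' i) (z' i) \<and>
             mv_hom S pl ng z (T i) (pl' i) (ng' i) (z' i) (h i) \<and> h i ` S = T i) \<and>
     (\<forall>x\<in>S. \<forall>y\<in>S. x \<noteq> y \<longrightarrow> (\<exists>i\<in>I. h i x \<noteq> h i y))"

definition semisimple :: "'i itself \<Rightarrow> 'b itself \<Rightarrow> 'a pav \<Rightarrow> bool" where
  "semisimple ti tb A \<longleftrightarrow>
     (\<exists>(I::'i set) (T::'i \<Rightarrow> 'b set) pl' ng' z' h.
        mv_subdirect_simple (pcar A) (padd A) (pneg A) (pcst A 0) I T pl' ng' z' h)"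

definition rat01 :: "rat \<Rightarrow> bool" where
  "rat01 r \<longleftrightarrow> 0 \<le> r \<and> r \<le> 1"

definition pavelka :: "'a pav \<Rightarrow> bool" where
  "pavelka A \<longleftrightarrow> mv_algebra (pcar A) (padd A) (pneg A) (pcst A 0) \<and>
     (\<forall>r. rat01 r \<longrightarrow> pcst A r \<in> pcar A) \<and>
     (\<forall>r s. rat01 r \<and> rat01 s \<longrightarrow> padd A (pcst A r) (pcst A s) = pcst A (min (r + s) 1)) \<and>
     (\<forall>r. rat01 r \<longrightarrow> pneg A (pcst A r) = pcst A (1 - r))"

definition p_le :: "'a pav \<Rightarrow> 'a \<Rightarrow> 'a \<Rightarrow> bool" where
  "p_le A = mv_le (padd A) (pneg A) (pcst A 0)"

definition p_imp :: "'a pav \<Rightarrow> 'a \<Rightarrow> 'a \<Rightarrow> 'a" where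
  "p_imp A = mv_imp (padd A) (pneg A)"

definition pfilter :: "'a pav \<Rightarrow> 'a set \<Rightarrow> bool" where
  "pfilter A F \<longleftrightarrow> mv_filter (pcar A) (padd A) (pneg A) (pcst A 0) F"

definition max_filter :: "'a pav \<Rightarrow> 'a set \<Rightarrow> bool" where
  "max_filter A F \<longleftrightarrow> pfilter A F \<and> F \<noteq> pcar A \<and>
     (\<forall>G. pfilter A G \<and> F \<subseteq> G \<and> G \<noteq> pcar A \<longrightarrow> G = F)"

definition specM :: "'a pav \<Rightarrow> 'a set set" where
  "specM A = {F. max_filter A F}"

definition std_hom :: "'a pav \<Rightarrow> ('a \<Rightarrow> real) \<Rightarrow> bool" where
  "std_hom A h \<longleftrightarrow> h \<in> extensional (pcar A) \<and>
     (\<forall>x\<in>pcar A. h x \<in> {0..1}) \<and>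
     (\<forall>x\<in>pcar A. \<forall>y\<in>pcar A. h (padd A x y) = min (h x + h y) 1) \<and>
     (\<forall>x\<in>pcar A. h (pneg A x) = 1 - h x) \<and>
     (\<forall>r. rat01 r \<longrightarrow> h (pcst A r) = real_of_rat r)"

text \<open>x/F: the image of x/F under the unique embedding of A/F into [0,1];
  equivalently, the value at x of the unique homomorphism A -> [0,1] whose 1-set is F.\<close>
definition qval :: "'a pav \<Rightarrow> 'a set \<Rightarrow> 'a \<Rightarrow> real" where
  "qval A F x = (THE h. std_hom A h \<and> {y \<in> pcar A. h y = 1} = F) x"

definition nat_emb :: "'a pav \<Rightarrow> 'a \<Rightarrow> ('a set \<Rightarrow> real)" where
  "nat_emb A x = restrict (\<lambda>F. qval A F x) (specM A)"

definition power_pav :: "'i set \<Rightarrow> ('i \<Rightarrow> real) pav" where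
  "power_pav I = \<lparr> pcar = I \<rightarrow>\<^sub>E {0..1},
     padd = (\<lambda>x y. restrict (\<lambda>i. min (x i + y i) 1) I),
     pneg = (\<lambda>x. restrict (\<lambda>i. 1 - x i) I),
     pcst = (\<lambda>r. restrict (\<lambda>i. real_of_rat r) I) \<rparr>"

definition std_imp :: "real \<Rightarrow> real \<Rightarrow> real" where
  "std_imp a b = min 1 (1 - a + b)"

definition std_mult :: "real \<Rightarrow> real \<Rightarrow> real" where
  "std_mult a b = max 0 (a + b - 1)"

definition inf01 :: "real set \<Rightarrow> real" where
  "inf01 S = (if S = {} then 1 else Inf S)"

definition sup01 :: "real set \<Rightarrow> real" where
  "sup01 S = (if S = {} then 0 else Sup S)"

definition fR :: "'i set \<Rightarrow> 'j set \<Rightarrow> ('i \<Rightarrow> 'j \<Rightarrow> real) \<Rightarrow> ('i \<Rightarrow> real) \<Rightarrow> ('j \<Rightarrow> real)" where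
  "fR I J R x = restrict (\<lambda>j. inf01 ((\<lambda>i. std_imp (R i j) (x i)) ` I)) J"

definition gR :: "'i set \<Rightarrow> 'j set \<Rightarrow> ('i \<Rightarrow> 'j \<Rightarrow> real) \<Rightarrow> ('j \<Rightarrow> real) \<Rightarrow> ('i \<Rightarrow> real)" where
  "gR I J R y = restrict (\<lambda>i. sup01 ((\<lambda>j. std_mult (R i j) (y j)) ` J)) I"

definition strong_ladj :: "'a pav \<Rightarrow> 'b pav \<Rightarrow> ('a \<Rightarrow> 'b) \<Rightarrow> ('b \<Rightarrow> 'a) \<Rightarrow> bool" where
  "strong_ladj A B f g \<longleftrightarrow>
     (\<forall>x\<in>pcar A. f x \<in> pcar B) \<and> (\<forall>y\<in>pcar B. g y \<in> pcar A) \<and>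
     (\<forall>x\<in>pcar A. \<forall>y\<in>pcar A. p_le A x y \<longrightarrow> p_le B (f x) (f y)) \<and>
     (\<forall>x\<in>pcar B. \<forall>y\<in>pcar B. p_le B x y \<longrightarrow> p_le A (g x) (g y)) \<and>
     (\<forall>y\<in>pcar A. \<forall>x\<in>pcar B. p_le B x (f y) \<longleftrightarrow> p_le A (g x) y) \<and>
     (\<forall>x\<in>pcar A. \<forall>r. rat01 r \<longrightarrow> p_imp B (pcst B r) (f x) = f (p_imp A (pcst A r) x))"

end

theory Submission
  imports Defs
begin

text \<open>
  Part (i) is a pointwise residuation computation in [0,1]: both \<open>x \<le> f\<^sub>R y\<close> and
  \<open>g\<^sub>R x \<le> y\<close> say that \<open>R(i,j) \<odot> x(j) \<le> y(i)\<close> for all \<open>i, j\<close>, and implication from a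
  constant commutes with infima.

  For part (ii), each maximal filter \<open>F\<close> gives the homomorphism \<open>x \<mapsto> x/F\<close> into [0,1], the
  Dedekind cut of the rationals \<open>r\<close> with \<open>r \<rightarrow> x \<in> F\<close>; semisimplicity means that these
  homomorphisms detect the order. The inequality \<open>f(x)/G \<le> f\<^sub>R(n\<^sub>A x)(G)\<close> is immediate from the
  definition of \<open>R\<close>. Conversely, if \<open>f(x)/G < \<tau> < f\<^sub>R(n\<^sub>A x)(G)\<close> with \<open>\<tau>\<close> rational, then for every
  maximal \<open>F\<close> some \<open>b\<close> has \<open>f(b)/G > 1 - \<tau> + f(x)/G\<close> and \<open>b/F < (\<tau> \<rightarrow> x)/F\<close>: shift an element
  nearly attaining the infimum \<open>R(F,G)\<close> by a rational constant. The maximal spectrum is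
  compact, so finitely many \<open>b\<close> suffice, and their meet \<open>m\<close> satisfies \<open>m \<le> \<tau> \<rightarrow> x\<close>. Hence
  \<open>f(m) \<le> \<tau> \<rightarrow> f(x)\<close>, whereas \<open>f\<close>, as a right adjoint, preserves the finite meet, so that
  \<open>f(m)/G > 1 - \<tau> + f(x)/G\<close>: a contradiction. The formula for \<open>g\<close> is proved dually with
  joins, using compactness of the maximal spectrum of \<open>B\<close>.
\<close>

section \<open>MV-algebras\<close>

locale mv_alg =
  fixes S :: "'a set" and pl :: "'a \<Rightarrow> 'a \<Rightarrow> 'a" and ng :: "'a \<Rightarrow> 'a" and z :: 'a
  assumes mv: "mv_algebra S pl ng z"
begin

abbreviation one where "one \<equiv> ng z"
abbreviation mul where "mul \<equiv> mv_mult pl ng"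
abbreviation imp where "imp \<equiv> mv_imp pl ng"
abbreviation le where "le \<equiv> mv_le pl ng z"

lemma zero_in [simp]: "z \<in> S"
  and add_in [simp]: "x \<in> S \<Longrightarrow> y \<in> S \<Longrightarrow> pl x y \<in> S"
  and neg_in [simp]: "x \<in> S \<Longrightarrow> ng x \<in> S"
  and add_assoc: "x \<in> S \<Longrightarrow> y \<in> S \<Longrightarrow> w \<in> S \<Longrightarrow> pl x (pl y w) = pl (pl x y) w"
  and add_commute: "x \<in> S \<Longrightarrow> y \<in> S \<Longrightarrow> pl x y = pl y x"
  and add_zero [simp]: "x \<in> S \<Longrightarrow> pl x z = x"
  and neg_neg [simp]: "x \<in> S \<Longrightarrow> ng (ng x) = x"
  and add_one [simp]: "x \<in> S \<Longrightarrow> pl x one = one"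
  and lukasiewicz: "x \<in> S \<Longrightarrow> y \<in> S \<Longrightarrow> pl (ng (pl (ng x) y)) y = pl (ng (pl (ng y) x)) x"
  using mv unfolding mv_algebra_def by blast+

lemma zero_add [simp]: "x \<in> S \<Longrightarrow> pl z x = x"
  using add_commute add_zero zero_in by metis

lemma one_add [simp]: "x \<in> S \<Longrightarrow> pl one x = one"
  using add_commute add_one zero_in neg_in by metis

lemma add_left_commute: "x \<in> S \<Longrightarrow> y \<in> S \<Longrightarrow> w \<in> S \<Longrightarrow> pl x (pl y w) = pl y (pl x w)"
  by (metis add_assoc add_commute)

lemmas add_ac = add_assoc add_commute add_left_commute

lemma add_neg_self [simp]: "x \<in> S \<Longrightarrow> pl x (ng x) = one"
proof -
  assume x: "x \<in> S"
  have "pl (ng (pl (ng x) one)) one = pl (ng (pl (ng one) x)) x"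
    by (rule lukasiewicz[OF x neg_in[OF zero_in]])
  hence "pl (ng x) x = one" using x by simp
  thus ?thesis using x by (simp add: add_commute)
qed

lemma neg_add_self [simp]: "x \<in> S \<Longrightarrow> pl (ng x) x = one"
  using add_neg_self add_commute by (metis neg_in)

lemma mul_in [simp]: "x \<in> S \<Longrightarrow> y \<in> S \<Longrightarrow> mul x y \<in> S"
  by (simp add: mv_mult_def)

lemma imp_in [simp]: "x \<in> S \<Longrightarrow> y \<in> S \<Longrightarrow> imp x y \<in> S"
  by (simp add: mv_imp_def)

lemma le_refl [simp]: "x \<in> S \<Longrightarrow> le x x"
  and le_one [simp]: "x \<in> S \<Longrightarrow> le x one"
  and zero_le [simp]: "x \<in> S \<Longrightarrow> le z x"
  by (simp_all add: mv_le_def)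

lemma le_imp_eq_add: "x \<in> S \<Longrightarrow> y \<in> S \<Longrightarrow> le x y \<Longrightarrow> y = pl x (ng (pl (ng y) x))"
proof -
  assume x: "x \<in> S" and y: "y \<in> S" and "le x y"
  hence "pl (ng (pl (ng x) y)) y = y" by (simp add: mv_le_def)
  thus ?thesis using lukasiewicz[OF x y] x y by (simp add: add_commute)
qed

lemma le_iff_add: "x \<in> S \<Longrightarrow> y \<in> S \<Longrightarrow> le x y \<longleftrightarrow> (\<exists>w\<in>S. y = pl x w)"
proof
  assume "x \<in> S" "y \<in> S" "le x y"
  thus "\<exists>w\<in>S. y = pl x w" using le_imp_eq_add by (metis neg_in add_in)
next
  assume x: "x \<in> S" and "\<exists>w\<in>S. y = pl x w"
  then obtain w where w: "w \<in> S" "y = pl x w" by blast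
  have "pl (ng x) (pl x w) = one" using x w by (simp add: add_assoc)
  thus "le x y" using w by (simp add: mv_le_def)
qed

lemma le_add: "x \<in> S \<Longrightarrow> y \<in> S \<Longrightarrow> le x (pl x y)"
  using le_iff_add by auto

lemma le_trans: "x \<in> S \<Longrightarrow> y \<in> S \<Longrightarrow> w \<in> S \<Longrightarrow> le x y \<Longrightarrow> le y w \<Longrightarrow> le x w"
  by (metis add_assoc add_in le_iff_add)

lemma add_mono: "x \<in> S \<Longrightarrow> y \<in> S \<Longrightarrow> w \<in> S \<Longrightarrow> le x y \<Longrightarrow> le (pl x w) (pl y w)"
  by (smt (verit) add_ac add_in le_iff_add)

lemma neg_antimono: "x \<in> S \<Longrightarrow> y \<in> S \<Longrightarrow> le x y \<Longrightarrow> le (ng y) (ng x)"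
  by (simp add: mv_le_def add_commute)

lemma mul_commute: "x \<in> S \<Longrightarrow> y \<in> S \<Longrightarrow> mul x y = mul y x"
  by (simp add: mv_mult_def add_commute)

lemma mul_assoc: "x \<in> S \<Longrightarrow> y \<in> S \<Longrightarrow> w \<in> S \<Longrightarrow> mul x (mul y w) = mul (mul x y) w"
  by (simp add: mv_mult_def add_assoc)

lemma mul_one [simp]: "x \<in> S \<Longrightarrow> mul x one = x"
  and one_mul [simp]: "x \<in> S \<Longrightarrow> mul one x = x"
  and mul_neg_self [simp]: "x \<in> S \<Longrightarrow> mul x (ng x) = z"
  and imp_zero [simp]: "x \<in> S \<Longrightarrow> imp x z = ng x"
  by (simp_all add: mv_mult_def mv_imp_def)

lemma mul_mono: "x \<in> S \<Longrightarrow> y \<in> S \<Longrightarrow> w \<in> S \<Longrightarrow> le x y \<Longrightarrow> le (mul x w) (mul y w)"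
  unfolding mv_mult_def by (meson neg_antimono add_mono neg_in add_in)

lemma mul_mono_both:
  "x \<in> S \<Longrightarrow> y \<in> S \<Longrightarrow> x' \<in> S \<Longrightarrow> y' \<in> S \<Longrightarrow> le x y \<Longrightarrow> le x' y' \<Longrightarrow> le (mul x x') (mul y y')"
  by (metis le_trans mul_commute mul_in mul_mono)

lemma residuation: "x \<in> S \<Longrightarrow> y \<in> S \<Longrightarrow> w \<in> S \<Longrightarrow> le (mul x y) w \<longleftrightarrow> le x (imp y w)"
  by (simp add: mv_le_def mv_mult_def mv_imp_def add_assoc)

lemma mul_le_left: "x \<in> S \<Longrightarrow> y \<in> S \<Longrightarrow> le (mul x y) x"
  by (metis le_one mul_commute mul_mono neg_in one_mul zero_in)

lemma mul_le_right: "x \<in> S \<Longrightarrow> y \<in> S \<Longrightarrow> le (mul x y) y"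
  using mul_le_left mul_commute by metis

lemma modus_ponens: "x \<in> S \<Longrightarrow> y \<in> S \<Longrightarrow> le (mul x (imp x y)) y"
  by (metis imp_in le_refl mul_commute residuation)

lemma imp_trans: "x \<in> S \<Longrightarrow> y \<in> S \<Longrightarrow> w \<in> S \<Longrightarrow> le (mul (imp x y) (imp y w)) (imp x w)"
proof -
  assume x: "x \<in> S" and y: "y \<in> S" and w: "w \<in> S"
  have "le (mul x (mul (imp x y) (imp y w))) (mul y (imp y w))"
    using mul_mono[OF _ y, of "mul x (imp x y)" "imp y w"] modus_ponens[OF x y] x y w
    by (simp add: mul_assoc)
  hence "le (mul x (mul (imp x y) (imp y w))) w"
    using le_trans[OF _ _ w _ modus_ponens[OF y w]] x y w by simp
  hence "le (mul (mul (imp x y) (imp y w)) x) w" using x y w by (simp add: mul_commute)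
  thus ?thesis using residuation x y w by simp
qed

lemma mul_add_le: "u \<in> S \<Longrightarrow> v \<in> S \<Longrightarrow> w \<in> S \<Longrightarrow> le (mul (pl u v) w) (pl u (mul v w))"
proof -
  assume u: "u \<in> S" and v: "v \<in> S" and w: "w \<in> S"
  have "le v (imp w (mul v w))" using residuation v w by (metis mul_in le_refl)
  hence "le (pl v u) (pl (imp w (mul v w)) u)" using add_mono u v w by simp
  moreover have "pl (imp w (mul v w)) u = imp w (pl u (mul v w))"
    using u v w by (simp add: mv_imp_def add_ac)
  ultimately show ?thesis using residuation u v w by (simp add: add_commute)
qed

lemma imp_add_compat: "a \<in> S \<Longrightarrow> b \<in> S \<Longrightarrow> x \<in> S \<Longrightarrow> y \<in> S \<Longrightarrow>
   le (mul (imp a x) (imp b y)) (imp (pl a b) (pl x y))"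
proof -
  assume a: "a \<in> S" and b: "b \<in> S" and x: "x \<in> S" and y: "y \<in> S"
  let ?A = "imp a x" and ?B = "imp b y"
  have 1: "le (mul (mul (pl a b) ?A) ?B) (mul (pl b (mul a ?A)) ?B)"
    using mul_mono mul_add_le[of b a ?A] a b x y by (simp add: add_commute)
  have 2: "le (mul (pl b (mul a ?A)) ?B) (pl (mul a ?A) (mul b ?B))"
    using mul_add_le[of "mul a ?A" b ?B] a b x y by (simp add: add_commute)
  have 3: "le (pl (mul a ?A) (mul b ?B)) (pl x (mul b ?B))"
    using add_mono[OF _ _ _ modus_ponens[OF a x]] a b x y by simp
  have 4: "le (pl x (mul b ?B)) (pl x y)"
    using add_mono[OF _ _ x modus_ponens[OF b y]] b x y by (simp add: add_commute)
  have "le (mul (mul (pl a b) ?A) ?B) (pl x y)"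
    using le_trans[OF _ _ _ 1 le_trans[OF _ _ _ 2 le_trans[OF _ _ _ 3 4]]] a b x y by simp
  moreover have "mul (mul (pl a b) ?A) ?B = mul (mul ?A ?B) (pl a b)"
    using a b x y by (metis add_in imp_in mul_assoc mul_commute mul_in)
  ultimately show ?thesis using residuation a b x y by simp
qed

definition meet where "meet x y = mul x (imp x y)"

lemma meet_commute: "x \<in> S \<Longrightarrow> y \<in> S \<Longrightarrow> meet x y = meet y x"
proof -
  assume x: "x \<in> S" and y: "y \<in> S"
  have "pl (ng (pl (ng (ng x)) (ng y))) (ng y) = pl (ng (pl (ng (ng y)) (ng x))) (ng x)"
    by (rule lukasiewicz) (simp_all add: x y)
  hence "mul (pl x (ng y)) y = mul (pl y (ng x)) x" using x y by (simp add: mv_mult_def)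
  thus ?thesis using x y by (simp add: meet_def mv_imp_def mul_commute add_commute)
qed

lemma mul_add_absorb: "a \<in> S \<Longrightarrow> b \<in> S \<Longrightarrow> pl (mul a b) (pl a b) = pl a b"
proof -
  assume a: "a \<in> S" and b: "b \<in> S"
  define s where "s = pl a b"
  define w where "w = mul a b"
  have sS: "s \<in> S" and wS: "w \<in> S" using a b by (simp_all add: s_def w_def)
  have "b = pl w (ng (pl (ng b) w))" using le_imp_eq_add[OF wS b] mul_le_right a b by (simp add: w_def)
  moreover have "ng (pl (ng b) w) = mul b (imp b (ng a))"
    using a b by (simp add: w_def mv_mult_def mv_imp_def add_commute)
  moreover have "mul b (imp b (ng a)) = mul (ng a) s"
    using meet_commute[of b "ng a"] a b by (simp add: s_def meet_def mv_imp_def)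
  ultimately have bw: "b = pl w (mul (ng a) s)" by simp
  have "s = pl a (ng (pl (ng s) a))" using le_imp_eq_add[OF a sS] le_add a b by (simp add: s_def)
  moreover have "ng (pl (ng s) a) = mul (ng a) s" using a sS by (simp add: mv_mult_def add_commute)
  ultimately have sa: "s = pl a (mul (ng a) s)" by simp
  have "s = pl a (pl w (mul (ng a) s))" using bw by (simp add: s_def)
  also have "\<dots> = pl w s" using a wS sS sa by (metis add_left_commute mul_in neg_in)
  finally show ?thesis by (simp add: s_def w_def)
qed

definition join where "join u v = pl (ng (pl (ng u) v)) v"

lemma join_commute: "u \<in> S \<Longrightarrow> v \<in> S \<Longrightarrow> join u v = join v u"
  by (simp add: join_def lukasiewicz)

lemma join_eq_one_iff: "u \<in> S \<Longrightarrow> v \<in> S \<Longrightarrow> join u v = one \<longleftrightarrow> le (ng v) (mul u (ng v))"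
  by (simp add: join_def mv_le_def mv_mult_def add_commute)

lemma prelinearity: "x \<in> S \<Longrightarrow> y \<in> S \<Longrightarrow> join (imp x y) (imp y x) = one"
proof -
  assume x: "x \<in> S" and y: "y \<in> S"
  have "pl (ng (imp x y)) (imp y x) = pl (mul x (ng y)) (pl x (ng y))"
    using x y by (simp add: mv_imp_def mv_mult_def add_commute)
  also have "\<dots> = imp y x" using mul_add_absorb x y by (simp add: mv_imp_def add_commute)
  finally show ?thesis using x y by (simp add: join_def)
qed

definition mpow where "mpow x n = ((mul x) ^^ n) one"

lemma mpow_0 [simp]: "mpow x 0 = one"
  and mpow_Suc: "mpow x (Suc n) = mul x (mpow x n)"
  by (simp_all add: mpow_def)

lemma mpow_in [simp]: "x \<in> S \<Longrightarrow> mpow x n \<in> S"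
  by (induct n) (simp_all add: mpow_Suc)

lemma mpow_add: "x \<in> S \<Longrightarrow> mpow x (n + m) = mul (mpow x n) (mpow x m)"
  by (induct n) (simp_all add: mpow_Suc mul_assoc)

lemma join_mpow_eq_one: "u \<in> S \<Longrightarrow> v \<in> S \<Longrightarrow> join u v = one \<Longrightarrow> join (mpow u n) v = one"
proof -
  assume u: "u \<in> S" and v: "v \<in> S" and j: "join u v = one"
  have b: "le (ng v) (mul u (ng v))" using join_eq_one_iff u v j by simp
  have "le (ng v) (mul (mpow u n) (ng v))"
  proof (induct n)
    case (Suc n)
    have "le (mul u (ng v)) (mul u (mul (mpow u n) (ng v)))"
      using mul_mono[OF _ _ u Suc] u v by (simp add: mul_commute)
    thus ?case using le_trans[OF _ _ _ b] u v by (simp add: mpow_Suc mul_assoc)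
  qed (use v in simp)
  thus ?thesis using join_eq_one_iff u v by simp
qed

lemma neg_mpow_imp_le_mpow_imp: "x \<in> S \<Longrightarrow> y \<in> S \<Longrightarrow> le (ng (mpow (imp x y) n)) (mpow (imp y x) m)"
proof -
  assume x: "x \<in> S" and y: "y \<in> S"
  let ?p = "imp x y" and ?q = "imp y x"
  have "join (mpow ?p n) ?q = one" using join_mpow_eq_one prelinearity x y by simp
  hence "join (mpow ?q m) (mpow ?p n) = one" using join_mpow_eq_one join_commute x y by simp
  hence "le (ng (mpow ?p n)) (mul (mpow ?q m) (ng (mpow ?p n)))" using join_eq_one_iff x y by simp
  thus ?thesis using le_trans[OF _ _ _ _ mul_le_left] x y by simp
qed

end

section \<open>Filters and the maximal spectrum\<close>

context mv_alg begin

definition is_filter where "is_filter F \<longleftrightarrow> mv_filter S pl ng z F"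

definition is_max_filter where
  "is_max_filter F \<longleftrightarrow> is_filter F \<and> F \<noteq> S \<and> (\<forall>G. is_filter G \<and> F \<subseteq> G \<and> G \<noteq> S \<longrightarrow> G = F)"

lemma filter_subset: "is_filter F \<Longrightarrow> F \<subseteq> S"
  and filter_up: "is_filter F \<Longrightarrow> x \<in> F \<Longrightarrow> y \<in> S \<Longrightarrow> le x y \<Longrightarrow> y \<in> F"
  and filter_mul: "is_filter F \<Longrightarrow> x \<in> F \<Longrightarrow> y \<in> F \<Longrightarrow> mul x y \<in> F"
  by (simp_all add: is_filter_def mv_filter_def)

lemma one_in_filter: "is_filter F \<Longrightarrow> one \<in> F"
proof -
  assume F: "is_filter F"
  then obtain x where "x \<in> F" by (auto simp: is_filter_def mv_filter_def)
  thus ?thesis using filter_up[OF F] filter_subset[OF F] by auto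
qed

lemma filter_zero_eq: "is_filter F \<Longrightarrow> z \<in> F \<Longrightarrow> F = S"
  using filter_up filter_subset zero_le by blast

lemma filter_imp: "is_filter F \<Longrightarrow> x \<in> F \<Longrightarrow> imp x y \<in> F \<Longrightarrow> y \<in> S \<Longrightarrow> y \<in> F"
proof -
  assume F: "is_filter F" and "x \<in> F" "imp x y \<in> F" "y \<in> S"
  moreover hence "x \<in> S" using filter_subset F by auto
  ultimately show ?thesis using filter_up[OF F filter_mul[OF F], of x "imp x y" y] modus_ponens by simp
qed

lemma filter_mpow: "is_filter F \<Longrightarrow> x \<in> F \<Longrightarrow> mpow x n \<in> F"
  by (induct n) (simp_all add: one_in_filter mpow_Suc filter_mul)

lemma filter_adjoin:
  assumes F: "is_filter F" and x: "x \<in> S"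
  shows "is_filter {y \<in> S. \<exists>f\<in>F. \<exists>n. le (mul f (mpow x n)) y}" (is "is_filter ?G")
  unfolding is_filter_def mv_filter_def
proof (intro conjI ballI impI)
  have FS: "F \<subseteq> S" using filter_subset[OF F] .
  have "one \<in> S \<and> (\<exists>f\<in>F. \<exists>n. le (mul f (mpow x n)) one)"
    using one_in_filter[OF F] by (intro conjI bexI[of _ one] exI[of _ 0]) simp_all
  thus "?G \<noteq> {}" by blast
  show "b \<in> ?G" if ab: "a \<in> ?G" "b \<in> S" "le a b" for a b
  proof -
    obtain g n where "g \<in> F" "le (mul g (mpow x n)) a" "a \<in> S" using ab(1) by auto
    moreover hence "le (mul g (mpow x n)) b" using le_trans[OF _ _ _ _ ab(3)] FS x ab(2) by auto
    ultimately show ?thesis using ab(2) by auto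
  qed
  show "mul a b \<in> ?G" if ab: "a \<in> ?G" "b \<in> ?G" for a b
  proof -
    obtain g n h k where g: "g \<in> F" "le (mul g (mpow x n)) a" "a \<in> S"
      and h: "h \<in> F" "le (mul h (mpow x k)) b" "b \<in> S" using ab by auto
    have gS: "g \<in> S" and hS: "h \<in> S" using g h FS by auto
    have "mul (mul g (mpow x n)) (mul h (mpow x k)) = mul (mul g h) (mpow x (n + k))"
      using gS hS x by (simp add: mpow_add) (metis mpow_in mul_assoc mul_commute mul_in)
    moreover have "le (mul (mul g (mpow x n)) (mul h (mpow x k))) (mul a b)"
      using mul_mono_both[OF _ _ _ _ g(2) h(2)] g h gS hS x by simp
    ultimately show ?thesis using filter_mul[OF F g(1) h(1)] g h by auto
  qed
qed (auto simp: filter_subset[OF F])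

lemma max_filter_neg_mpow:
  assumes m: "is_max_filter F" and x: "x \<in> S" "x \<notin> F"
  shows "\<exists>n. ng (mpow x n) \<in> F"
proof -
  have F: "is_filter F" and FS: "F \<subseteq> S" using m filter_subset by (auto simp: is_max_filter_def)
  let ?G = "{y \<in> S. \<exists>f\<in>F. \<exists>n. le (mul f (mpow x n)) y}"
  have FG: "F \<subseteq> ?G"
  proof
    fix y assume y: "y \<in> F"
    hence "y \<in> S" "le (mul y (mpow x 0)) y" using FS by auto
    thus "y \<in> ?G" using y by blast
  qed
  have "le (mul one (mpow x 1)) x" using x by (simp add: mpow_Suc)
  hence "x \<in> ?G" using one_in_filter[OF F] x by blast
  hence "?G \<noteq> F" using x(2) by blast
  moreover have "\<forall>G. is_filter G \<and> F \<subseteq> G \<and> G \<noteq> S \<longrightarrow> G = F"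
    using m by (simp add: is_max_filter_def)
  ultimately have "?G = S" using filter_adjoin[OF F x(1)] FG by blast
  hence "z \<in> ?G" by simp
  then obtain g n where g: "g \<in> F" "le (mul g (mpow x n)) z" by blast
  hence "le g (ng (mpow x n))" using residuation[of g "mpow x n" z] FS x by auto
  thus ?thesis using filter_up[OF F g(1)] x mpow_in neg_in by blast
qed

lemma max_filter_prime: "is_max_filter F \<Longrightarrow> x \<in> S \<Longrightarrow> y \<in> S \<Longrightarrow> imp x y \<in> F \<or> imp y x \<in> F"
proof (rule ccontr)
  assume m: "is_max_filter F" and x: "x \<in> S" and y: "y \<in> S" and c: "\<not> (imp x y \<in> F \<or> imp y x \<in> F)"
  have F: "is_filter F" using m by (simp add: is_max_filter_def)
  obtain n where n: "ng (mpow (imp x y) n) \<in> F" using max_filter_neg_mpow[OF m] x y c by (meson imp_in)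
  obtain k where k: "ng (mpow (imp y x) k) \<in> F" using max_filter_neg_mpow[OF m] x y c by (meson imp_in)
  \<comment> \<open>by prelinearity, the product of these two elements of \<open>F\<close> is zero\<close>
  have "le (mul (ng (mpow (imp x y) n)) (ng (mpow (imp y x) k)))
           (mul (mpow (imp y x) k) (ng (mpow (imp y x) k)))"
    by (rule mul_mono[OF _ _ _ neg_mpow_imp_le_mpow_imp[OF x y]]) (simp_all add: x y)
  hence "z \<in> F" using filter_up[OF F filter_mul[OF F n k]] x y by simp
  thus False using filter_zero_eq F m by (simp add: is_max_filter_def)
qed

lemma filter_Union_chain:
  assumes C: "C \<noteq> {}" "\<forall>X\<in>C. is_filter X" and ch: "\<forall>X\<in>C. \<forall>Y\<in>C. X \<subseteq> Y \<or> Y \<subseteq> X"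
  shows "is_filter (\<Union>C)"
  unfolding is_filter_def mv_filter_def
proof (intro conjI ballI impI)
  show "\<Union>C \<subseteq> S" using C filter_subset by blast
  show "\<Union>C \<noteq> {}" using C one_in_filter by blast
  show "y \<in> \<Union>C" if "x \<in> \<Union>C" "y \<in> S" "le x y" for x y using that C filter_up by blast
  show "mul x y \<in> \<Union>C" if xy: "x \<in> \<Union>C" "y \<in> \<Union>C" for x y
  proof -
    obtain X Y where XY: "X \<in> C" "Y \<in> C" "x \<in> X" "y \<in> Y" using xy by blast
    show ?thesis
    proof (cases "X \<subseteq> Y")
      case True thus ?thesis using XY C filter_mul by blast
    next
      case False hence "Y \<subseteq> X" using ch XY by blast
      thus ?thesis using XY C filter_mul by blast
    qed
  qed
qed

lemma max_filter_extend:
  assumes G: "is_filter G" "G \<noteq> S"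
  shows "\<exists>F. is_max_filter F \<and> G \<subseteq> F"
proof -
  define P where "P = {H. is_filter H \<and> H \<noteq> S \<and> G \<subseteq> H}"
  have "\<exists>U\<in>P. \<forall>X\<in>C. X \<subseteq> U" if C: "C \<in> chains P" for C
  proof (cases "C = {}")
    case True thus ?thesis using G by (auto simp: P_def)
  next
    case False
    have CP: "C \<subseteq> P" and ch: "\<forall>X\<in>C. \<forall>Y\<in>C. X \<subseteq> Y \<or> Y \<subseteq> X"
      using C by (auto simp: chains_def chain_subset_def)
    have mem: "\<And>X. X \<in> C \<Longrightarrow> is_filter X \<and> X \<noteq> S \<and> G \<subseteq> X" using CP by (auto simp: P_def)
    have "is_filter (\<Union>C)" using filter_Union_chain False mem ch by blast
    moreover have "z \<notin> \<Union>C" using mem filter_zero_eq by blast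
    hence "\<Union>C \<noteq> S" using zero_in by blast
    moreover obtain X0 where "X0 \<in> C" using False by blast
    hence "G \<subseteq> \<Union>C" using mem by blast
    ultimately have "\<Union>C \<in> P" by (simp add: P_def)
    thus ?thesis by blast
  qed
  hence "\<exists>M\<in>P. \<forall>X\<in>P. M \<subseteq> X \<longrightarrow> X = M" by (intro Zorn_Lemma2) blast
  then obtain M where M: "M \<in> P" "\<forall>X\<in>P. M \<subseteq> X \<longrightarrow> X = M" by blast
  hence "is_max_filter M" by (auto simp: P_def is_max_filter_def)
  thus ?thesis using M by (auto simp: P_def)
qed

lemma hom_mul:
  "mv_hom S pl ng z T pl' ng' z' h \<Longrightarrow> x \<in> S \<Longrightarrow> y \<in> S \<Longrightarrow> h (mul x y) = mv_mult pl' ng' (h x) (h y)"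
  and hom_imp:
  "mv_hom S pl ng z T pl' ng' z' h \<Longrightarrow> x \<in> S \<Longrightarrow> y \<in> S \<Longrightarrow> h (imp x y) = mv_imp pl' ng' (h x) (h y)"
  by (simp_all add: mv_hom_def mv_mult_def mv_imp_def)

lemma kernel_is_filter:
  assumes T: "mv_alg T pl' ng' z'" and hom: "mv_hom S pl ng z T pl' ng' z' h"
  shows "is_filter {x \<in> S. h x = ng' z'}"
  unfolding is_filter_def mv_filter_def
proof (intro conjI ballI impI)
  interpret T: mv_alg T pl' ng' z' by (rule T)
  show "{x \<in> S. h x = ng' z'} \<noteq> {}" using hom by (auto simp: mv_hom_def intro!: exI[of _ one])
  show "y \<in> {x \<in> S. h x = ng' z'}" if xy: "x \<in> {x \<in> S. h x = ng' z'}" "y \<in> S" "le x y" for x y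
  proof -
    have "pl' (ng' (ng' z')) (h y) = ng' z'"
      using xy hom arg_cong[OF xy(3)[unfolded mv_le_def], of h] by (simp add: mv_hom_def)
    thus ?thesis using xy hom by (simp add: mv_hom_def)
  qed
  show "mul x y \<in> {x \<in> S. h x = ng' z'}"
    if "x \<in> {x \<in> S. h x = ng' z'}" "y \<in> {x \<in> S. h x = ng' z'}" for x y
    using that hom_mul[OF hom] by (simp add: mv_mult_def)
qed auto

lemma image_is_filter:
  assumes T: "mv_alg T pl' ng' z'" and hom: "mv_hom S pl ng z T pl' ng' z' h" and onto: "h ` S = T"
    and G: "is_filter G" "{x \<in> S. h x = ng' z'} \<subseteq> G"
  shows "mv_filter T pl' ng' z' (h ` G)"
  unfolding mv_filter_def
proof (intro conjI ballI impI)
  interpret T: mv_alg T pl' ng' z' by (rule T)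
  have GS: "G \<subseteq> S" using filter_subset G by simp
  show "h ` G \<subseteq> T" "h ` G \<noteq> {}" using hom GS one_in_filter[OF G(1)] onto by auto
  show "t \<in> h ` G" if ut: "u \<in> h ` G" "t \<in> T" "T.le u t" for u t
  proof -
    obtain g a where g: "g \<in> G" "u = h g" and a: "a \<in> S" "t = h a" using ut onto by auto
    have "h (imp g a) = ng' z'" using ut(3) g a GS hom_imp[OF hom] by (auto simp: mv_le_def mv_imp_def)
    moreover have "imp g a \<in> S" using GS g a by auto
    ultimately have "imp g a \<in> G" using G(2) by blast
    thus ?thesis using filter_imp[OF G(1) g(1)] a by simp
  qed
  show "T.mul u v \<in> h ` G" if uv: "u \<in> h ` G" "v \<in> h ` G" for u v
  proof -
    obtain g1 g2 where "g1 \<in> G" "g2 \<in> G" "u = h g1" "v = h g2" using uv by auto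
    moreover hence "h (mul g1 g2) = T.mul u v" using hom_mul[OF hom] GS by auto
    ultimately show ?thesis using filter_mul[OF G(1)] by (metis imageI)
  qed
qed

lemma kernel_is_max_filter:
  assumes simple: "mv_simple T pl' ng' z'" and hom: "mv_hom S pl ng z T pl' ng' z' h"
    and onto: "h ` S = T"
  shows "is_max_filter {x \<in> S. h x = ng' z'}"
proof -
  have T: "mv_alg T pl' ng' z'" using simple by unfold_locales (simp add: mv_simple_def)
  define K where "K = {x \<in> S. h x = ng' z'}"
  have "G = K" if G: "is_filter G" "K \<subseteq> G" "G \<noteq> S" for G
  proof -
    have GS: "G \<subseteq> S" using filter_subset G by simp
    have "h ` G = {ng' z'} \<or> h ` G = T"
      using simple image_is_filter[OF T hom onto] G by (simp add: mv_simple_def K_def)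
    thus "G = K"
    proof
      assume "h ` G = {ng' z'}"
      thus ?thesis using G GS by (auto simp: K_def)
    next
      assume "h ` G = T"
      then obtain g where g: "g \<in> G" "h g = z'" using mv_alg.zero_in[OF T] by (metis imageE)
      moreover have "g \<in> S" using g GS by auto
      ultimately have "ng g \<in> K" using hom by (simp add: K_def mv_hom_def)
      hence "ng g \<in> G" using G(2) by blast
      hence "mul g (ng g) \<in> G" using filter_mul[OF G(1) g(1)] by blast
      hence "z \<in> G" using g GS by auto
      thus ?thesis using filter_zero_eq G by simp
    qed
  qed
  moreover have "K \<noteq> S" using hom simple by (auto simp: K_def mv_simple_def mv_hom_def)
  ultimately show ?thesis using kernel_is_filter[OF T hom] by (simp add: is_max_filter_def K_def)
qed

definition mprod where "mprod xs = foldr mul xs one"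

lemma mprod_in: "set xs \<subseteq> S \<Longrightarrow> mprod xs \<in> S"
  by (induct xs) (auto simp: mprod_def)

lemma mprod_append: "set xs \<subseteq> S \<Longrightarrow> set ys \<subseteq> S \<Longrightarrow> mprod (xs @ ys) = mul (mprod xs) (mprod ys)"
  by (induct xs) (auto simp: mprod_def mul_assoc mprod_in[unfolded mprod_def])

lemma mprod_in_filter: "is_filter F \<Longrightarrow> set xs \<subseteq> F \<Longrightarrow> mprod xs \<in> F"
  by (induct xs) (auto simp: mprod_def one_in_filter filter_mul)

lemma filter_generated:
  assumes \<phi>X: "\<phi> ` X \<subseteq> S"
  shows "is_filter {y \<in> S. \<exists>bs. set bs \<subseteq> X \<and> le (mprod (map \<phi> bs)) y}" (is "is_filter ?G")
  unfolding is_filter_def mv_filter_def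
proof (intro conjI ballI impI)
  have \<phi>S: "mprod (map \<phi> bs) \<in> S" if "set bs \<subseteq> X" for bs
    using \<phi>X that by (intro mprod_in) auto
  have "one \<in> ?G" by (auto simp: mprod_def intro!: exI[of _ "[]"])
  thus "?G \<noteq> {}" by blast
  show "y \<in> ?G" if xy: "x \<in> ?G" "y \<in> S" "le x y" for x y
  proof -
    obtain bs where bs: "set bs \<subseteq> X" "le (mprod (map \<phi> bs)) x" "x \<in> S" using xy(1) by auto
    hence "le (mprod (map \<phi> bs)) y" using le_trans[OF \<phi>S[OF bs(1)] bs(3) xy(2) bs(2) xy(3)] by simp
    thus ?thesis using bs(1) xy(2) by auto
  qed
  show "mul x y \<in> ?G" if xy: "x \<in> ?G" "y \<in> ?G" for x y
  proof -
    obtain bs cs where bs: "set bs \<subseteq> X" "le (mprod (map \<phi> bs)) x" "x \<in> S"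
      and cs: "set cs \<subseteq> X" "le (mprod (map \<phi> cs)) y" "y \<in> S" using xy by auto
    have "mprod (map \<phi> (bs @ cs)) = mul (mprod (map \<phi> bs)) (mprod (map \<phi> cs))"
      using \<phi>X bs(1) cs(1) mprod_append[of "map \<phi> bs" "map \<phi> cs"] by auto
    hence "le (mprod (map \<phi> (bs @ cs))) (mul x y)"
      using mul_mono_both[OF \<phi>S[OF bs(1)] bs(3) \<phi>S[OF cs(1)] cs(3) bs(2) cs(2)] by simp
    moreover have "set (bs @ cs) \<subseteq> X" using bs(1) cs(1) by simp
    ultimately show ?thesis using bs(3) cs(3) by (metis (mono_tags, lifting) mem_Collect_eq mul_in)
  qed
qed auto

text \<open>Compactness of the maximal spectrum, phrased for the open sets of maximal filters
  omitting \<open>\<phi> b\<close>.\<close>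
lemma max_filter_compact:
  assumes \<phi>X: "\<phi> ` X \<subseteq> S" and cover: "\<forall>F. is_max_filter F \<longrightarrow> (\<exists>b\<in>X. \<phi> b \<notin> F)"
  shows "\<exists>bs. set bs \<subseteq> X \<and> (\<forall>F. is_max_filter F \<longrightarrow> (\<exists>b\<in>set bs. \<phi> b \<notin> F))"
proof -
  define G where "G = {y \<in> S. \<exists>bs. set bs \<subseteq> X \<and> le (mprod (map \<phi> bs)) y}"
  have G: "is_filter G" unfolding G_def using filter_generated[OF \<phi>X] .
  show ?thesis
  proof (cases "z \<in> G")
    case True
    then obtain bs where bs: "set bs \<subseteq> X" "le (mprod (map \<phi> bs)) z" by (auto simp: G_def)
    have "\<exists>b\<in>set bs. \<phi> b \<notin> F" if F: "is_max_filter F" for F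
    proof (rule ccontr)
      have Ff: "is_filter F" "F \<noteq> S" using F by (auto simp: is_max_filter_def)
      assume "\<not> (\<exists>b\<in>set bs. \<phi> b \<notin> F)"
      hence "set (map \<phi> bs) \<subseteq> F" by auto
      hence "mprod (map \<phi> bs) \<in> F" by (rule mprod_in_filter[OF Ff(1)])
      hence "z \<in> F" using filter_up[OF Ff(1) _ zero_in bs(2)] by blast
      thus False using filter_zero_eq Ff by blast
    qed
    thus ?thesis using bs(1) by blast
  next
    case False
    hence "G \<noteq> S" by auto
    then obtain F where F: "is_max_filter F" "G \<subseteq> F" using max_filter_extend G by blast
    obtain b where b: "b \<in> X" "\<phi> b \<notin> F" using cover F(1) by blast
    have "mprod (map \<phi> [b]) = \<phi> b" using b(1) \<phi>X by (auto simp: mprod_def)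
    hence "\<phi> b \<in> G" using b(1) \<phi>X le_refl[of "\<phi> b"] unfolding G_def
      by (metis (mono_tags, lifting) empty_subsetI image_subset_iff insert_subset list.set mem_Collect_eq)
    thus ?thesis using b(2) F(2) by blast
  qed
qed

end

section \<open>Values of elements at maximal filters\<close>

lemma rat01_0 [simp]: "rat01 0" and rat01_1 [simp]: "rat01 1"
  by (simp_all add: rat01_def)

lemma rat01_min_add: "rat01 r \<Longrightarrow> rat01 s \<Longrightarrow> rat01 (min (r + s) 1)"
  and rat01_one_minus: "rat01 r \<Longrightarrow> rat01 (1 - r)"
  by (auto simp: rat01_def)

lemma of_rat_min: "(of_rat (min a b) :: real) = min (of_rat a) (of_rat b)"
  by (simp add: min_def of_rat_less_eq)

locale pav_alg =
  fixes A :: "'a pav"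
  assumes pav: "pavelka A"
begin

sublocale mv_alg "pcar A" "padd A" "pneg A" "pcst A 0"
  using pav by unfold_locales (simp add: pavelka_def)

abbreviation c where "c \<equiv> pcst A"

lemma const_in [simp]: "rat01 r \<Longrightarrow> c r \<in> pcar A"
  and const_add: "rat01 r \<Longrightarrow> rat01 s \<Longrightarrow> padd A (c r) (c s) = c (min (r + s) 1)"
  and const_neg: "rat01 r \<Longrightarrow> pneg A (c r) = c (1 - r)"
  using pav by (simp_all add: pavelka_def)

lemma one_eq_const: "one = c 1"
  using const_neg[of 0] by simp

lemma const_mul: "rat01 r \<Longrightarrow> rat01 s \<Longrightarrow> mul (c r) (c s) = c (max 0 (r + s - 1))"
proof -
  assume r: "rat01 r" and s: "rat01 s"
  have "mul (c r) (c s) = pneg A (c (min (1 - r + (1 - s)) 1))"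
    using r s by (simp add: mv_mult_def const_neg const_add rat01_def)
  also have "\<dots> = c (1 - min (1 - r + (1 - s)) 1)" using r s by (intro const_neg) (auto simp: rat01_def)
  also have "1 - min (1 - r + (1 - s)) 1 = max 0 (r + s - 1)" by (simp add: min_def max_def)
  finally show ?thesis .
qed

lemma const_imp: "rat01 r \<Longrightarrow> rat01 s \<Longrightarrow> imp (c r) (c s) = c (min 1 (1 - r + s))"
  by (simp add: mv_imp_def const_neg const_add rat01_def min.commute)

lemma const_mpow: "rat01 r \<Longrightarrow> mpow (c r) n = c (max 0 (of_nat n * r - (of_nat n - 1)))"
proof (induct n)
  case 0 thus ?case by (simp add: one_eq_const)
next
  case (Suc n)
  have "of_nat n * r \<le> of_nat n" using Suc.prems by (simp add: rat01_def mult_left_le)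
  hence "rat01 (max 0 (of_nat n * r - (of_nat n - 1)))" using Suc.prems by (auto simp: rat01_def)
  hence "mpow (c r) (Suc n) = c (max 0 (r + max 0 (of_nat n * r - (of_nat n - 1)) - 1))"
    using Suc by (simp add: mpow_Suc const_mul)
  also have "max 0 (r + max 0 (of_nat n * r - (of_nat n - 1)) - 1)
      = max 0 (of_nat (Suc n) * r - (of_nat (Suc n) - 1))"
    using Suc.prems by (auto simp: rat01_def max_def algebra_simps)
  finally show ?case .
qed

lemma const_not_in_filter:
  assumes "is_filter F" "F \<noteq> pcar A" "rat01 r" "r < 1"
  shows "c r \<notin> F"
proof
  assume "c r \<in> F"
  obtain n :: nat where "1 / (1 - r) < of_nat n" using reals_Archimedean2 by blast
  hence "max 0 (of_nat n * r - (of_nat n - 1)) = 0" using assms by (simp add: field_simps)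
  hence "mpow (c r) n = pcst A 0" using const_mpow assms by simp
  thus False using filter_mpow[OF assms(1) \<open>c r \<in> F\<close>, of n] filter_zero_eq assms by simp
qed

text \<open>The value of \<open>x\<close> modulo a maximal filter \<open>F\<close> is the Dedekind cut of the rationals \<open>r\<close>
  according to whether \<open>r \<rightarrow> x\<close> or \<open>x \<rightarrow> r\<close> lies in \<open>F\<close>.\<close>

definition lower_cut where "lower_cut F x = {r. rat01 r \<and> imp (c r) x \<in> F}"
definition upper_cut where "upper_cut F x = {r. rat01 r \<and> imp x (c r) \<in> F}"
definition cut_value where "cut_value F x = Sup (of_rat ` lower_cut F x :: real set)"

context
  fixes F assumes max: "is_max_filter F"
begin

lemma F_filter: "is_filter F" and F_proper: "F \<noteq> pcar A"
  using max by (simp_all add: is_max_filter_def)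

lemma one_in_F: "one \<in> F"
  using one_in_filter F_filter by simp

lemma zero_in_lower_cut: "x \<in> pcar A \<Longrightarrow> 0 \<in> lower_cut F x"
  using one_in_F by (simp add: lower_cut_def mv_imp_def)

lemma one_in_upper_cut: "x \<in> pcar A \<Longrightarrow> 1 \<in> upper_cut F x"
  using one_in_F by (simp add: upper_cut_def mv_imp_def one_eq_const[symmetric])

lemma lower_cut_le_upper_cut:
  assumes x: "x \<in> pcar A" and r: "r \<in> lower_cut F x" and s: "s \<in> upper_cut F x"
  shows "r \<le> s"
proof (rule ccontr)
  assume "\<not> r \<le> s"
  have rs: "rat01 r" "rat01 s" using r s by (auto simp: lower_cut_def upper_cut_def)
  have "mul (imp (c r) x) (imp x (c s)) \<in> F"
    using r s filter_mul F_filter by (auto simp: lower_cut_def upper_cut_def)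
  hence "imp (c r) (c s) \<in> F" using filter_up[OF F_filter _ _ imp_trans] x rs by simp
  moreover have "rat01 (min 1 (1 - r + s))" "min 1 (1 - r + s) < 1"
    using rs \<open>\<not> r \<le> s\<close> by (auto simp: rat01_def)
  ultimately show False using const_not_in_filter[OF F_filter F_proper] const_imp rs by auto
qed

lemma lower_cut_or_upper_cut: "x \<in> pcar A \<Longrightarrow> rat01 r \<Longrightarrow> r \<in> lower_cut F x \<or> r \<in> upper_cut F x"
  using max_filter_prime[OF max, of "c r" x] by (auto simp: lower_cut_def upper_cut_def)

lemma le_cut_value: "x \<in> pcar A \<Longrightarrow> r \<in> lower_cut F x \<Longrightarrow> of_rat r \<le> cut_value F x"
  unfolding cut_value_def
  by (rule cSup_upper) (auto simp: lower_cut_def rat01_def intro!: bdd_aboveI[of _ 1])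

lemma cut_value_le: "x \<in> pcar A \<Longrightarrow> s \<in> upper_cut F x \<Longrightarrow> cut_value F x \<le> of_rat s"
proof -
  assume x: "x \<in> pcar A" and s: "s \<in> upper_cut F x"
  show ?thesis unfolding cut_value_def
    by (rule cSup_least) (use zero_in_lower_cut[OF x] lower_cut_le_upper_cut[OF x _ s] in \<open>auto simp: of_rat_less_eq\<close>)
qed

lemma cut_value_bounds: "x \<in> pcar A \<Longrightarrow> 0 \<le> cut_value F x \<and> cut_value F x \<le> 1"
  using le_cut_value[OF _ zero_in_lower_cut, of x] cut_value_le[OF _ one_in_upper_cut, of x] by simp

lemma lower_cut_approx: "x \<in> pcar A \<Longrightarrow> (0::real) < d \<Longrightarrow> \<exists>r \<in> lower_cut F x. cut_value F x - d < of_rat r"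
proof -
  assume x: "x \<in> pcar A" and d: "0 < d"
  show ?thesis
  proof (cases "cut_value F x - d < 0")
    case True thus ?thesis using zero_in_lower_cut[OF x] by force
  next
    case False
    obtain q where q: "cut_value F x - d < of_rat q" "of_rat q < cut_value F x"
      using of_rat_dense[of "cut_value F x - d" "cut_value F x"] d by auto
    hence "0 \<le> real_of_rat q" "real_of_rat q \<le> 1" using False cut_value_bounds[OF x] by linarith+
    hence "rat01 q" by (simp add: rat01_def)
    thus ?thesis using lower_cut_or_upper_cut[OF x] cut_value_le[OF x] q by force
  qed
qed

lemma upper_cut_approx: "x \<in> pcar A \<Longrightarrow> (0::real) < d \<Longrightarrow> \<exists>r \<in> upper_cut F x. of_rat r < cut_value F x + d"
proof -
  assume x: "x \<in> pcar A" and d: "0 < d"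
  show ?thesis
  proof (cases "1 < cut_value F x + d")
    case True thus ?thesis using one_in_upper_cut[OF x] by force
  next
    case False
    obtain q where q: "cut_value F x < of_rat q" "of_rat q < cut_value F x + d"
      using of_rat_dense[of "cut_value F x" "cut_value F x + d"] d by auto
    hence "0 \<le> real_of_rat q" "real_of_rat q \<le> 1" using False cut_value_bounds[OF x] by linarith+
    hence "rat01 q" by (simp add: rat01_def)
    thus ?thesis using lower_cut_or_upper_cut[OF x] le_cut_value[OF x] q by force
  qed
qed

lemma cut_value_const: "rat01 r \<Longrightarrow> cut_value F (c r) = of_rat r"
proof -
  assume r: "rat01 r"
  hence "r \<in> lower_cut F (c r)" "r \<in> upper_cut F (c r)"
    using one_in_F const_imp[OF r r] by (auto simp: lower_cut_def upper_cut_def one_eq_const)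
  thus ?thesis using le_cut_value cut_value_le r by (meson const_in order.antisym)
qed

lemma lower_cut_add:
  assumes x: "x \<in> pcar A" and y: "y \<in> pcar A" and r: "r \<in> lower_cut F x" and s: "s \<in> lower_cut F y"
  shows "min (r + s) 1 \<in> lower_cut F (padd A x y)"
proof -
  have rs: "rat01 r" "rat01 s" using r s by (auto simp: lower_cut_def)
  have "mul (imp (c r) x) (imp (c s) y) \<in> F"
    using r s filter_mul F_filter by (auto simp: lower_cut_def)
  hence "imp (padd A (c r) (c s)) (padd A x y) \<in> F"
    using filter_up[OF F_filter _ _ imp_add_compat] x y rs by simp
  thus ?thesis using const_add rs rat01_min_add by (simp add: lower_cut_def)
qed

lemma upper_cut_add:
  assumes x: "x \<in> pcar A" and y: "y \<in> pcar A" and r: "r \<in> upper_cut F x" and s: "s \<in> upper_cut F y"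
  shows "min (r + s) 1 \<in> upper_cut F (padd A x y)"
proof -
  have rs: "rat01 r" "rat01 s" using r s by (auto simp: upper_cut_def)
  have "mul (imp x (c r)) (imp y (c s)) \<in> F"
    using r s filter_mul F_filter by (auto simp: upper_cut_def)
  hence "imp (padd A x y) (padd A (c r) (c s)) \<in> F"
    using filter_up[OF F_filter _ _ imp_add_compat] x y rs by simp
  thus ?thesis using const_add rs rat01_min_add by (simp add: upper_cut_def)
qed

lemma lower_cut_neg: "x \<in> pcar A \<Longrightarrow> rat01 r \<Longrightarrow> r \<in> lower_cut F (pneg A x) \<longleftrightarrow> 1 - r \<in> upper_cut F x"
  using rat01_one_minus
  by (simp add: lower_cut_def upper_cut_def mv_imp_def const_neg add_commute)

lemma cut_value_add:
  assumes x: "x \<in> pcar A" and y: "y \<in> pcar A"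
  shows "cut_value F (padd A x y) = min (cut_value F x + cut_value F y) 1"
proof (rule order.antisym)
  show "min (cut_value F x + cut_value F y) 1 \<le> cut_value F (padd A x y)"
  proof (rule field_le_epsilon)
    fix e :: real assume e: "0 < e"
    obtain r s where r: "r \<in> lower_cut F x" "cut_value F x - e/2 < of_rat r"
      and s: "s \<in> lower_cut F y" "cut_value F y - e/2 < of_rat s"
      using lower_cut_approx[OF x, of "e/2"] lower_cut_approx[OF y, of "e/2"] e by auto
    have "of_rat (min (r + s) 1) \<le> cut_value F (padd A x y)"
      using le_cut_value lower_cut_add[OF x y r(1) s(1)] x y by simp
    hence "min (of_rat r + of_rat s) 1 \<le> cut_value F (padd A x y)" by (simp add: of_rat_add of_rat_min)
    thus "min (cut_value F x + cut_value F y) 1 \<le> cut_value F (padd A x y) + e"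
      using r s e by (auto simp: min_def split: if_splits)
  qed
  show "cut_value F (padd A x y) \<le> min (cut_value F x + cut_value F y) 1"
  proof (rule field_le_epsilon)
    fix e :: real assume e: "0 < e"
    obtain r s where r: "r \<in> upper_cut F x" "of_rat r < cut_value F x + e/2"
      and s: "s \<in> upper_cut F y" "of_rat s < cut_value F y + e/2"
      using upper_cut_approx[OF x, of "e/2"] upper_cut_approx[OF y, of "e/2"] e by auto
    have "cut_value F (padd A x y) \<le> of_rat (min (r + s) 1)"
      using cut_value_le upper_cut_add[OF x y r(1) s(1)] x y by simp
    hence "cut_value F (padd A x y) \<le> min (of_rat r + of_rat s) 1" by (simp add: of_rat_add of_rat_min)
    thus "cut_value F (padd A x y) \<le> min (cut_value F x + cut_value F y) 1 + e"
      using r s e by (auto simp: min_def split: if_splits)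
  qed
qed

lemma cut_value_neg:
  assumes x: "x \<in> pcar A"
  shows "cut_value F (pneg A x) = 1 - cut_value F x"
proof (rule order.antisym)
  show "1 - cut_value F x \<le> cut_value F (pneg A x)"
  proof (rule field_le_epsilon)
    fix e :: real assume e: "0 < e"
    obtain r where r: "r \<in> upper_cut F x" "of_rat r < cut_value F x + e"
      using upper_cut_approx[OF x e] by auto
    hence "1 - r \<in> lower_cut F (pneg A x)"
      using lower_cut_neg[OF x] rat01_one_minus by (simp add: upper_cut_def)
    hence "of_rat (1 - r) \<le> cut_value F (pneg A x)" using le_cut_value x by simp
    thus "1 - cut_value F x \<le> cut_value F (pneg A x) + e" using r by (simp add: of_rat_diff)
  qed
  show "cut_value F (pneg A x) \<le> 1 - cut_value F x"
  proof (rule field_le_epsilon)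
    fix e :: real assume e: "0 < e"
    obtain r where r: "r \<in> lower_cut F (pneg A x)" "cut_value F (pneg A x) - e < of_rat r"
      using lower_cut_approx[OF _ e, of "pneg A x"] x by auto
    moreover have "rat01 r" using r by (simp add: lower_cut_def)
    ultimately have "1 - r \<in> upper_cut F x" using lower_cut_neg[OF x] by simp
    hence "cut_value F x \<le> of_rat (1 - r)" using cut_value_le x by simp
    thus "cut_value F (pneg A x) \<le> 1 - cut_value F x + e" using r by (simp add: of_rat_diff)
  qed
qed

lemma cut_value_mpow:
  "x \<in> pcar A \<Longrightarrow> cut_value F (mpow x n) = max 0 (of_nat n * cut_value F x - (of_nat n - 1))"
proof (induct n)
  case 0 thus ?case using cut_value_const[of 1] by (simp add: one_eq_const)
next
  case (Suc n) thus ?case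
    using cut_value_bounds[OF Suc.prems]
    by (simp add: mpow_Suc mv_mult_def cut_value_add cut_value_neg max_def min_def algebra_simps)
qed

lemma cut_value_eq_one_iff:
  assumes x: "x \<in> pcar A"
  shows "cut_value F x = 1 \<longleftrightarrow> x \<in> F"
proof -
  have one: "cut_value F y = 1" if "y \<in> F" "y \<in> pcar A" for y
  proof -
    have "1 \<in> lower_cut F y" using that by (simp add: lower_cut_def mv_imp_def const_neg)
    thus ?thesis using le_cut_value[of y 1] cut_value_bounds that by force
  qed
  show ?thesis
  proof
    assume v: "cut_value F x = 1"
    show "x \<in> F"
    proof (rule ccontr)
      assume "x \<notin> F"
      then obtain n where "pneg A (mpow x n) \<in> F" using max_filter_neg_mpow[OF max x] by auto
      hence "cut_value F (mpow x n) = 0" using one cut_value_neg x by fastforce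
      thus False using cut_value_mpow[OF x, of n] v by simp
    qed
  qed (use one x in blast)
qed

end

lemma max_filter_iff: "max_filter A F \<longleftrightarrow> is_max_filter F"
  by (simp add: max_filter_def is_max_filter_def pfilter_def is_filter_def)

lemma specM_iff: "F \<in> specM A \<longleftrightarrow> is_max_filter F"
  by (simp add: specM_def max_filter_iff)

lemma std_hom_cut_value:
  assumes "is_max_filter F"
  shows "std_hom A (restrict (cut_value F) (pcar A))"
  unfolding std_hom_def using assms cut_value_bounds cut_value_add cut_value_neg cut_value_const
  by (auto simp: rat01_def)

text \<open>A homomorphism into the standard algebra is determined by its 1-set, since
  \<open>h x \<ge> r\<close> iff \<open>h (r \<rightarrow> x) = 1\<close> for every rational \<open>r\<close>.\<close>
lemma std_hom_unique:
  assumes h1: "std_hom A h1" and h2: "std_hom A h2"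
    and same_one_set: "{y \<in> pcar A. h1 y = 1} = {y \<in> pcar A. h2 y = 1}"
  shows "h1 = h2"
proof -
  have imp_const: "h (imp (c q) x) = min (1 - of_rat q + h x) 1"
    if "std_hom A h" "rat01 q" "x \<in> pcar A" for h q x
    using that rat01_one_minus[OF that(2)]
    by (simp add: std_hom_def mv_imp_def const_neg of_rat_diff)
  have le: "ha x \<le> hb x" if x: "x \<in> pcar A" and ha: "std_hom A ha" and hb: "std_hom A hb"
     and e: "{y \<in> pcar A. ha y = 1} = {y \<in> pcar A. hb y = 1}" for x ha hb
  proof (rule ccontr)
    assume "\<not> ha x \<le> hb x"
    then obtain q where q: "hb x < of_rat q" "of_rat q < ha x" using of_rat_dense[of "hb x" "ha x"] by auto
    have "0 \<le> hb x" "ha x \<le> 1" using ha hb x by (auto simp: std_hom_def)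
    hence "0 \<le> real_of_rat q" "real_of_rat q \<le> 1" using q by linarith+
    hence r: "rat01 q" by (simp add: rat01_def)
    have iS: "imp (c q) x \<in> pcar A" using r x by simp
    have "ha (imp (c q) x) = 1" using imp_const[OF ha r x] q by simp
    hence "hb (imp (c q) x) = 1" using e iS by blast
    thus False using imp_const[OF hb r x] q by simp
  qed
  show ?thesis
  proof
    fix x show "h1 x = h2 x"
    proof (cases "x \<in> pcar A")
      case True thus ?thesis using le[OF True h1 h2 same_one_set] le[OF True h2 h1 same_one_set[symmetric]] by simp
    next
      case False thus ?thesis using h1 h2 by (simp add: std_hom_def extensional_def)
    qed
  qed
qed

lemma qval_eq_cut_value: "F \<in> specM A \<Longrightarrow> x \<in> pcar A \<Longrightarrow> qval A F x = cut_value F x"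
proof -
  assume F: "F \<in> specM A" and x: "x \<in> pcar A"
  have m: "is_max_filter F" using F by (simp add: specM_iff)
  have "{y \<in> pcar A. restrict (cut_value F) (pcar A) y = 1} = F"
    using cut_value_eq_one_iff[OF m] filter_subset[OF F_filter[OF m]] by auto
  hence "(THE h. std_hom A h \<and> {y \<in> pcar A. h y = 1} = F) = restrict (cut_value F) (pcar A)"
    using std_hom_cut_value[OF m] std_hom_unique by (intro the_equality) auto
  thus ?thesis using x by (simp add: qval_def)
qed

context
  fixes F assumes F: "F \<in> specM A"
begin

lemma qval_bounds: "x \<in> pcar A \<Longrightarrow> 0 \<le> qval A F x \<and> qval A F x \<le> 1"
  and qval_add: "x \<in> pcar A \<Longrightarrow> y \<in> pcar A \<Longrightarrow> qval A F (padd A x y) = min (qval A F x + qval A F y) 1"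
  and qval_neg: "x \<in> pcar A \<Longrightarrow> qval A F (pneg A x) = 1 - qval A F x"
  and qval_const: "rat01 r \<Longrightarrow> qval A F (c r) = of_rat r"
  and qval_eq_one_iff: "x \<in> pcar A \<Longrightarrow> qval A F x = 1 \<longleftrightarrow> x \<in> F"
  using F cut_value_bounds cut_value_add cut_value_neg cut_value_const cut_value_eq_one_iff
  by (simp_all add: qval_eq_cut_value specM_iff)

lemma qval_imp: "x \<in> pcar A \<Longrightarrow> y \<in> pcar A \<Longrightarrow> qval A F (imp x y) = std_imp (qval A F x) (qval A F y)"
  by (simp add: mv_imp_def qval_add qval_neg std_imp_def min.commute)

lemma qval_mul: "x \<in> pcar A \<Longrightarrow> y \<in> pcar A \<Longrightarrow> qval A F (mul x y) = std_mult (qval A F x) (qval A F y)"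
  by (simp add: mv_mult_def qval_add qval_neg std_mult_def min_def max_def)

lemma qval_one: "qval A F one = 1"
  using qval_const[of 1] by (simp add: one_eq_const)

lemma qval_mono: "x \<in> pcar A \<Longrightarrow> y \<in> pcar A \<Longrightarrow> le x y \<Longrightarrow> qval A F x \<le> qval A F y"
  using qval_imp[of x y] qval_one qval_bounds[of x] qval_bounds[of y]
  by (auto simp: mv_le_def mv_imp_def std_imp_def min_def split: if_splits)

lemma imp_notin_iff: "x \<in> pcar A \<Longrightarrow> y \<in> pcar A \<Longrightarrow> imp x y \<notin> F \<longleftrightarrow> qval A F y < qval A F x"
  using qval_eq_one_iff[of "imp x y"] qval_imp[of x y] qval_bounds[of x] qval_bounds[of y]
  by (auto simp: std_imp_def min_def split: if_splits)

end

text \<open>The kernels of the projections onto the simple factors are maximal filters.\<close>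
lemma semisimple_le:
  assumes ss: "semisimple TYPE('i) TYPE('b) A" and x: "x \<in> pcar A" and y: "y \<in> pcar A"
    and le: "\<forall>F\<in>specM A. qval A F x \<le> qval A F y"
  shows "le x y"
proof (rule ccontr)
  obtain I :: "'i set" and T :: "'i \<Rightarrow> 'b set" and pl' ng' z' h
    where sd: "mv_subdirect_simple (pcar A) (padd A) (pneg A) (pcst A 0) I T pl' ng' z' h"
    using ss unfolding semisimple_def by blast
  assume "\<not> le x y"
  hence "imp x y \<noteq> one" by (simp add: mv_le_def mv_imp_def)
  then obtain i where i: "i \<in> I" "h i (imp x y) \<noteq> h i one"
    using sd x y unfolding mv_subdirect_simple_def by (meson imp_in neg_in zero_in)
  have simple: "mv_simple (T i) (pl' i) (ng' i) (z' i)"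
    and hom: "mv_hom (pcar A) (padd A) (pneg A) (pcst A 0) (T i) (pl' i) (ng' i) (z' i) (h i)"
    and onto: "h i ` pcar A = T i" using sd i by (auto simp: mv_subdirect_simple_def)
  let ?K = "{x \<in> pcar A. h i x = ng' i (z' i)}"
  have K: "?K \<in> specM A" using kernel_is_max_filter[OF simple hom onto] by (simp add: specM_iff)
  hence "qval A ?K (imp x y) = 1" using le qval_imp[OF K x y] by (simp add: std_imp_def)
  hence "imp x y \<in> ?K" using qval_eq_one_iff[OF K] x y by simp
  moreover have "h i one = ng' i (z' i)" using hom by (simp add: mv_hom_def)
  ultimately show False using i by simp
qed

end

section \<open>Fuzzy relations between powers of [0,1]\<close>

lemma inf01_lower: "i \<in> I \<Longrightarrow> \<forall>k\<in>I. 0 \<le> f k \<Longrightarrow> inf01 (f ` I) \<le> f i"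
  unfolding inf01_def by (auto intro!: cInf_lower bdd_belowI[of _ 0])

lemma inf01_greatest: "\<forall>i\<in>I. a \<le> f i \<Longrightarrow> a \<le> 1 \<Longrightarrow> a \<le> inf01 (f ` I)"
  unfolding inf01_def by (auto intro!: cInf_greatest)

lemma le_inf01_iff:
  assumes "a \<le> 1" "\<forall>k\<in>I. 0 \<le> f k"
  shows "a \<le> inf01 (f ` I) \<longleftrightarrow> (\<forall>i\<in>I. a \<le> f i)"
proof
  assume a: "a \<le> inf01 (f ` I)"
  show "\<forall>i\<in>I. a \<le> f i"
  proof
    fix i assume "i \<in> I"
    thus "a \<le> f i" using inf01_lower[OF _ assms(2)] a by (meson order_trans)
  qed
qed (rule inf01_greatest[OF _ assms(1)])

lemma inf01_less: "I \<noteq> {} \<Longrightarrow> \<forall>k\<in>I. 0 \<le> f k \<Longrightarrow> inf01 (f ` I) < t \<Longrightarrow> \<exists>i\<in>I. f i < (t::real)"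
proof -
  assume ne: "I \<noteq> {}" and f: "\<forall>k\<in>I. 0 \<le> f k" and lt: "inf01 (f ` I) < t"
  have "\<exists>x\<in>f ` I. x < t" using ne f lt
    by (subst cInf_less_iff[symmetric]) (auto simp: inf01_def intro!: bdd_belowI[of _ 0])
  thus ?thesis by auto
qed

lemma inf01_in_01: "\<forall>i\<in>I. f i \<in> {0..1} \<Longrightarrow> inf01 (f ` I) \<in> {0..1}"
proof (cases "I = {}")
  case False
  assume f: "\<forall>i\<in>I. f i \<in> {0..1}"
  obtain i where i: "i \<in> I" using False by blast
  have "inf01 (f ` I) \<le> f i" using inf01_lower[OF i] f by auto
  thus ?thesis using inf01_greatest[of I 0 f] f i by auto
qed (simp add: inf01_def)

lemma sup01_upper: "i \<in> I \<Longrightarrow> \<forall>k\<in>I. f k \<le> 1 \<Longrightarrow> f i \<le> sup01 (f ` I)"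
  unfolding sup01_def by (auto intro!: cSup_upper bdd_aboveI[of _ 1])

lemma sup01_least: "\<forall>i\<in>I. f i \<le> a \<Longrightarrow> 0 \<le> a \<Longrightarrow> sup01 (f ` I) \<le> a"
  unfolding sup01_def by (auto intro!: cSup_least)

lemma sup01_le_iff:
  assumes "0 \<le> a" "\<forall>k\<in>I. f k \<le> 1"
  shows "sup01 (f ` I) \<le> a \<longleftrightarrow> (\<forall>i\<in>I. f i \<le> a)"
proof
  assume a: "sup01 (f ` I) \<le> a"
  show "\<forall>i\<in>I. f i \<le> a"
  proof
    fix i assume "i \<in> I"
    thus "f i \<le> a" using sup01_upper[OF _ assms(2)] a by (meson order_trans)
  qed
qed (rule sup01_least[OF _ assms(1)])

lemma sup01_in_01: "\<forall>i\<in>I. f i \<in> {0..1} \<Longrightarrow> sup01 (f ` I) \<in> {0..1}"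
proof (cases "I = {}")
  case False
  assume f: "\<forall>i\<in>I. f i \<in> {0..1}"
  obtain i where i: "i \<in> I" using False by blast
  have "f i \<le> sup01 (f ` I)" using sup01_upper[OF i] f by auto
  thus ?thesis using sup01_least[of I f 1] f i by auto
qed (simp add: sup01_def)

lemma std_imp_in_01: "0 \<le> a \<Longrightarrow> a \<le> 1 \<Longrightarrow> 0 \<le> b \<Longrightarrow> b \<le> 1 \<Longrightarrow> std_imp a b \<in> {0..1}"
  and std_mult_in_01: "0 \<le> a \<Longrightarrow> a \<le> 1 \<Longrightarrow> 0 \<le> b \<Longrightarrow> b \<le> 1 \<Longrightarrow> std_mult a b \<in> {0..1}"
  by (auto simp: std_imp_def std_mult_def)

lemma std_residuation: "0 \<le> b \<Longrightarrow> a \<le> 1 \<Longrightarrow> std_mult r a \<le> b \<longleftrightarrow> a \<le> std_imp r (b::real)"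
  by (auto simp: std_mult_def std_imp_def)

lemma std_imp_swap: "a \<le> 1 \<Longrightarrow> p \<le> 1 \<Longrightarrow> std_imp a (std_imp p b) = std_imp p (std_imp a (b::real))"
  by (simp add: std_imp_def min_def)

definition trunc01 :: "real \<Rightarrow> real" where "trunc01 t = max 0 (min 1 t)"

lemma inf01_imp_const:
  assumes f: "\<forall>i\<in>I. 0 \<le> f i \<and> f i \<le> (1::real)" and p: "0 \<le> p" "p \<le> 1"
  shows "inf01 ((\<lambda>i. std_imp p (f i)) ` I) = std_imp p (inf01 (f ` I))"
proof (rule order.antisym)
  have f_inf: "inf01 (f ` I) \<in> {0..1}" using inf01_in_01[of I f] f by auto
  show "std_imp p (inf01 (f ` I)) \<le> inf01 ((\<lambda>i. std_imp p (f i)) ` I)"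
  proof (rule inf01_greatest)
    show "\<forall>i\<in>I. std_imp p (inf01 (f ` I)) \<le> std_imp p (f i)"
      using inf01_lower[of _ I f] f by (fastforce simp: std_imp_def)
  qed (simp add: std_imp_def)
  show "inf01 ((\<lambda>i. std_imp p (f i)) ` I) \<le> std_imp p (inf01 (f ` I))"
  proof (rule field_le_epsilon)
    fix e :: real assume e: "0 < e"
    show "inf01 ((\<lambda>i. std_imp p (f i)) ` I) \<le> std_imp p (inf01 (f ` I)) + e"
    proof (cases "I = {}")
      case False
      then obtain i where i: "i \<in> I" "f i < inf01 (f ` I) + e"
        using inf01_less[of I f "inf01 (f ` I) + e"] f e by auto
      have "\<forall>k\<in>I. 0 \<le> std_imp p (f k)" using f p by (simp add: std_imp_def)
      hence "inf01 ((\<lambda>i. std_imp p (f i)) ` I) \<le> std_imp p (f i)" by (rule inf01_lower[OF i(1)])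
      moreover have "std_imp p (f i) \<le> std_imp p (inf01 (f ` I)) + e"
        using i(2) e by (auto simp: std_imp_def)
      ultimately show ?thesis by linarith
    qed (use p e in \<open>simp add: inf01_def std_imp_def\<close>)
  qed
qed

lemma power_pav_le_iff: "p_le (power_pav I) x y \<longleftrightarrow> (\<forall>i\<in>I. x i \<le> y i)"
proof -
  have "p_le (power_pav I) x y \<longleftrightarrow> restrict (\<lambda>i. min (1 - x i + y i) 1) I = restrict (\<lambda>i. 1) I"
    by (simp add: p_le_def mv_le_def power_pav_def cong: restrict_cong)
  also have "\<dots> \<longleftrightarrow> (\<forall>i\<in>I. min (1 - x i + y i) 1 = (1::real))"
    by (auto simp: restrict_def fun_eq_iff split: if_splits)
  also have "\<dots> \<longleftrightarrow> (\<forall>i\<in>I. x i \<le> y i)" by (auto simp: min_def)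
  finally show ?thesis .
qed

context
  fixes I :: "'i set" and J :: "'j set" and R :: "'i \<Rightarrow> 'j \<Rightarrow> real"
  assumes R: "\<forall>i\<in>I. \<forall>j\<in>J. R i j \<in> {0..1}"
begin

lemma fR_in_power: "x \<in> I \<rightarrow>\<^sub>E {0..1} \<Longrightarrow> fR I J R x \<in> J \<rightarrow>\<^sub>E {0..1}"
  using R by (auto simp: fR_def intro!: inf01_in_01 std_imp_in_01)

lemma gR_in_power: "y \<in> J \<rightarrow>\<^sub>E {0..1} \<Longrightarrow> gR I J R y \<in> I \<rightarrow>\<^sub>E {0..1}"
  using R by (auto simp: gR_def intro!: sup01_in_01 std_mult_in_01)

lemma fR_gR_galois:
  assumes x: "x \<in> J \<rightarrow>\<^sub>E {0..1}" and y: "y \<in> I \<rightarrow>\<^sub>E {0..1}"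
  shows "(\<forall>j\<in>J. x j \<le> fR I J R y j) \<longleftrightarrow> (\<forall>i\<in>I. gR I J R x i \<le> y i)"
proof -
  have fR_j: "x j \<le> fR I J R y j \<longleftrightarrow> (\<forall>i\<in>I. x j \<le> std_imp (R i j) (y i))" if j: "j \<in> J" for j
  proof -
    have "\<forall>i\<in>I. 0 \<le> std_imp (R i j) (y i)" using R y j by (force simp: std_imp_def)
    moreover have "x j \<le> 1" using x j by auto
    ultimately show ?thesis using le_inf01_iff j by (simp add: fR_def)
  qed
  have gR_i: "gR I J R x i \<le> y i \<longleftrightarrow> (\<forall>j\<in>J. std_mult (R i j) (x j) \<le> y i)" if i: "i \<in> I" for i
  proof -
    have "\<forall>j\<in>J. std_mult (R i j) (x j) \<le> 1" using R x i by (force simp: std_mult_def)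
    moreover have "0 \<le> y i" using y i by auto
    ultimately show ?thesis using sup01_le_iff i by (simp add: gR_def)
  qed
  have "(\<forall>j\<in>J. \<forall>i\<in>I. x j \<le> std_imp (R i j) (y i)) \<longleftrightarrow> (\<forall>i\<in>I. \<forall>j\<in>J. std_mult (R i j) (x j) \<le> y i)"
    using x y std_residuation by fastforce
  thus ?thesis using fR_j gR_i by simp
qed

lemma fR_imp_const:
  assumes x: "x \<in> I \<rightarrow>\<^sub>E {0..1}" and r: "rat01 r"
  shows "p_imp (power_pav J) (pcst (power_pav J) r) (fR I J R x)
       = fR I J R (p_imp (power_pav I) (pcst (power_pav I) r) x)"
proof -
  let ?p = "real_of_rat r"
  have imp_const: "p_imp (power_pav K) (pcst (power_pav K) r) v = restrict (\<lambda>k. std_imp ?p (v k)) K"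
    for K :: "'k set" and v
    by (simp add: p_imp_def mv_imp_def power_pav_def std_imp_def min.commute cong: restrict_cong)
  have "std_imp ?p (inf01 ((\<lambda>i. std_imp (R i j) (x i)) ` I))
      = inf01 ((\<lambda>i. std_imp (R i j) (restrict (\<lambda>i. std_imp ?p (x i)) I i)) ` I)" if j: "j \<in> J" for j
  proof -
    have "\<forall>i\<in>I. 0 \<le> std_imp (R i j) (x i) \<and> std_imp (R i j) (x i) \<le> 1"
      using R x j by (force simp: std_imp_def)
    moreover have "0 \<le> ?p" "?p \<le> 1" using r by (auto simp: rat01_def)
    ultimately have "std_imp ?p (inf01 ((\<lambda>i. std_imp (R i j) (x i)) ` I))
        = inf01 ((\<lambda>i. std_imp ?p (std_imp (R i j) (x i))) ` I)"
      by (rule inf01_imp_const[symmetric])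
    also have "\<dots> = inf01 ((\<lambda>i. std_imp (R i j) (restrict (\<lambda>i. std_imp ?p (x i)) I i)) ` I)"
      using R j \<open>?p \<le> 1\<close> std_imp_swap by (intro arg_cong[where f = inf01] image_cong) auto
    finally show ?thesis .
  qed
  thus ?thesis unfolding imp_const by (auto simp: fR_def intro: restrict_ext)
qed

theorem strong_ladj_fR_gR: "strong_ladj (power_pav I) (power_pav J) (fR I J R) (gR I J R)"
proof -
  have car: "pcar (power_pav K) = K \<rightarrow>\<^sub>E {0..1}" for K :: "'k set" by (simp add: power_pav_def)
  \<comment> \<open>monotonicity of both maps follows from the Galois connection\<close>
  have "\<forall>j\<in>J. fR I J R x j \<le> fR I J R y j"
    if x: "x \<in> I \<rightarrow>\<^sub>E {0..1}" and y: "y \<in> I \<rightarrow>\<^sub>E {0..1}" and xy: "\<forall>i\<in>I. x i \<le> y i" for x y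
  proof -
    have "\<forall>i\<in>I. gR I J R (fR I J R x) i \<le> x i" using fR_gR_galois[OF fR_in_power[OF x] x] by simp
    hence "\<forall>i\<in>I. gR I J R (fR I J R x) i \<le> y i" using xy by force
    thus ?thesis using fR_gR_galois[OF fR_in_power[OF x] y] by simp
  qed
  moreover have "\<forall>i\<in>I. gR I J R x i \<le> gR I J R y i"
    if x: "x \<in> J \<rightarrow>\<^sub>E {0..1}" and y: "y \<in> J \<rightarrow>\<^sub>E {0..1}" and xy: "\<forall>j\<in>J. x j \<le> y j" for x y
  proof -
    have "\<forall>j\<in>J. y j \<le> fR I J R (gR I J R y) j" using fR_gR_galois[OF y gR_in_power[OF y]] by simp
    hence "\<forall>j\<in>J. x j \<le> fR I J R (gR I J R y) j" using xy by force
    thus ?thesis using fR_gR_galois[OF x gR_in_power[OF y]] by simp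
  qed
  ultimately show ?thesis
    unfolding strong_ladj_def car power_pav_le_iff
    using fR_in_power gR_in_power fR_gR_galois fR_imp_const by (simp add: car)
qed

end

section \<open>Strong adjunctions between semisimple Pavelka algebras\<close>

locale ss_pav = pav_alg +
  assumes qval_le_imp_le:
    "x \<in> pcar A \<Longrightarrow> y \<in> pcar A \<Longrightarrow> (\<forall>F\<in>specM A. qval A F x \<le> qval A F y) \<Longrightarrow> le x y"
begin

lemma le_iff_qval_le: "x \<in> pcar A \<Longrightarrow> y \<in> pcar A \<Longrightarrow> le x y \<longleftrightarrow> (\<forall>F\<in>specM A. qval A F x \<le> qval A F y)"
  using qval_le_imp_le qval_mono by blast

lemma meet_in [simp]: "a \<in> pcar A \<Longrightarrow> b \<in> pcar A \<Longrightarrow> meet a b \<in> pcar A"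
  and join_in [simp]: "a \<in> pcar A \<Longrightarrow> b \<in> pcar A \<Longrightarrow> join a b \<in> pcar A"
  by (simp_all add: meet_def join_def)

lemma qval_meet: "F \<in> specM A \<Longrightarrow> a \<in> pcar A \<Longrightarrow> b \<in> pcar A \<Longrightarrow> qval A F (meet a b) = min (qval A F a) (qval A F b)"
  using qval_bounds[of F a] qval_bounds[of F b]
  by (auto simp: meet_def qval_mul qval_imp std_mult_def std_imp_def min_def max_def)

lemma qval_join: "F \<in> specM A \<Longrightarrow> a \<in> pcar A \<Longrightarrow> b \<in> pcar A \<Longrightarrow> qval A F (join a b) = max (qval A F a) (qval A F b)"
  using qval_bounds[of F a] qval_bounds[of F b]
  by (auto simp: join_def qval_add qval_neg min_def max_def)

definition meets where "meets bs = foldr meet bs one"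
definition joins where "joins bs = foldr join bs (pcst A 0)"

lemma meets_in: "set bs \<subseteq> pcar A \<Longrightarrow> meets bs \<in> pcar A"
  and joins_in: "set bs \<subseteq> pcar A \<Longrightarrow> joins bs \<in> pcar A"
  by (induct bs) (auto simp: meets_def joins_def)

lemma qval_meets_le: "F \<in> specM A \<Longrightarrow> set bs \<subseteq> pcar A \<Longrightarrow> b \<in> set bs \<Longrightarrow> qval A F (meets bs) \<le> qval A F b"
proof (induct bs)
  case (Cons b' bs) thus ?case
    using qval_meet[OF Cons.prems(1), of b' "meets bs"] meets_in[of bs] by (auto simp: meets_def)
qed simp

lemma le_joins: "set bs \<subseteq> pcar A \<Longrightarrow> b \<in> set bs \<Longrightarrow> le b (joins bs)"
proof -
  assume bs: "set bs \<subseteq> pcar A" and b: "b \<in> set bs"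
  have "qval A F b \<le> qval A F (joins bs)" if F: "F \<in> specM A" for F
    using bs b
  proof (induct bs)
    case (Cons b' bs) thus ?case
      using qval_join[OF F, of b' "joins bs"] joins_in[of bs] by (auto simp: joins_def)
  qed simp
  moreover have "b \<in> pcar A" using bs b by auto
  ultimately show ?thesis using le_iff_qval_le[OF _ joins_in[OF bs]] by simp
qed

lemma qval_joins_le: "F \<in> specM A \<Longrightarrow> set bs \<subseteq> pcar A \<Longrightarrow> \<forall>b\<in>set bs. qval A F b \<le> t \<Longrightarrow> 0 \<le> t \<Longrightarrow>
    qval A F (joins bs) \<le> t"
proof (induct bs)
  case Nil thus ?case using qval_const[of F 0] by (simp add: joins_def)
next
  case (Cons b bs) thus ?case
    using qval_join[OF Cons.prems(1), of b "joins bs"] joins_in[of bs] by (auto simp: joins_def)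
qed

lemma finite_cover_above:
  assumes \<phi>X: "\<phi> ` X \<subseteq> pcar A" and y: "y \<in> pcar A"
    and cover: "\<forall>F\<in>specM A. \<exists>b\<in>X. qval A F y < qval A F (\<phi> b)"
  shows "\<exists>bs. set bs \<subseteq> X \<and> (\<forall>F\<in>specM A. \<exists>b\<in>set bs. qval A F y < qval A F (\<phi> b))"
proof -
  have notin: "imp (\<phi> b) y \<notin> F \<longleftrightarrow> qval A F y < qval A F (\<phi> b)" if "F \<in> specM A" "b \<in> X" for F b
    using imp_notin_iff[OF that(1) _ y, of "\<phi> b"] that(2) \<phi>X by blast
  have "(\<lambda>b. imp (\<phi> b) y) ` X \<subseteq> pcar A" using \<phi>X y by auto
  moreover have "\<forall>F. is_max_filter F \<longrightarrow> (\<exists>b\<in>X. imp (\<phi> b) y \<notin> F)"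
  proof (intro allI impI)
    fix F assume "is_max_filter F"
    hence F: "F \<in> specM A" by (simp add: specM_iff)
    then obtain b where "b \<in> X" "qval A F y < qval A F (\<phi> b)" using cover by blast
    thus "\<exists>b\<in>X. imp (\<phi> b) y \<notin> F" using notin[OF F] by blast
  qed
  ultimately obtain bs where bs: "set bs \<subseteq> X" "\<forall>F. is_max_filter F \<longrightarrow> (\<exists>b\<in>set bs. imp (\<phi> b) y \<notin> F)"
    by (blast dest: max_filter_compact)
  have "\<exists>b\<in>set bs. qval A F y < qval A F (\<phi> b)" if F: "F \<in> specM A" for F
  proof -
    obtain b where b: "b \<in> set bs" "imp (\<phi> b) y \<notin> F" using bs(2) F by (auto simp: specM_iff)
    thus ?thesis using notin[OF F] bs(1) by blast
  qed
  thus ?thesis using bs(1) by blast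
qed

lemma meets_le_of_cover:
  assumes X: "X \<subseteq> pcar A" and y: "y \<in> pcar A"
    and cover: "\<forall>F\<in>specM A. \<exists>b\<in>X. qval A F b < qval A F y"
  shows "\<exists>bs. set bs \<subseteq> X \<and> le (meets bs) y"
proof -
  have notin: "imp y b \<notin> F \<longleftrightarrow> qval A F b < qval A F y" if "F \<in> specM A" "b \<in> X" for F b
    using imp_notin_iff[OF that(1) y, of b] that(2) X by blast
  have "imp y ` X \<subseteq> pcar A" using X y by auto
  moreover have "\<forall>F. is_max_filter F \<longrightarrow> (\<exists>b\<in>X. imp y b \<notin> F)"
  proof (intro allI impI)
    fix F assume "is_max_filter F"
    hence F: "F \<in> specM A" by (simp add: specM_iff)
    then obtain b where "b \<in> X" "qval A F b < qval A F y" using cover by blast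
    thus "\<exists>b\<in>X. imp y b \<notin> F" using notin[OF F] by blast
  qed
  ultimately obtain bs where bs: "set bs \<subseteq> X" "\<forall>F. is_max_filter F \<longrightarrow> (\<exists>b\<in>set bs. imp y b \<notin> F)"
    by (blast dest: max_filter_compact)
  have bsA: "set bs \<subseteq> pcar A" using bs(1) X by auto
  have "qval A F (meets bs) \<le> qval A F y" if F: "F \<in> specM A" for F
  proof -
    obtain b where b: "b \<in> set bs" "imp y b \<notin> F" using bs(2) F by (auto simp: specM_iff)
    hence "qval A F b < qval A F y" using notin[OF F] bs(1) by blast
    thus ?thesis using qval_meets_le[OF F bsA b(1)] by simp
  qed
  thus ?thesis using le_iff_qval_le[OF meets_in[OF bsA] y] bs(1) by auto
qed

end

lemma (in pav_alg) semisimple_imp_ss_pav: "semisimple TYPE('i) TYPE('b) A \<Longrightarrow> ss_pav A"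
  using semisimple_le by unfold_locales (auto simp: pav)

locale pav_adjunction = A: ss_pav A + B: ss_pav B for A :: "'a pav" and B :: "'b pav" +
  fixes f :: "'a \<Rightarrow> 'b" and g :: "'b \<Rightarrow> 'a"
  assumes adj: "strong_ladj A B f g"
begin

lemma f_in [simp]: "a \<in> pcar A \<Longrightarrow> f a \<in> pcar B"
  and g_in [simp]: "b \<in> pcar B \<Longrightarrow> g b \<in> pcar A"
  and f_mono: "a \<in> pcar A \<Longrightarrow> a' \<in> pcar A \<Longrightarrow> A.le a a' \<Longrightarrow> B.le (f a) (f a')"
  and galois: "a \<in> pcar A \<Longrightarrow> b \<in> pcar B \<Longrightarrow> B.le b (f a) \<longleftrightarrow> A.le (g b) a"
  and f_imp_const: "a \<in> pcar A \<Longrightarrow> rat01 r \<Longrightarrow> B.imp (B.c r) (f a) = f (A.imp (A.c r) a)"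
  using adj unfolding strong_ladj_def p_le_def p_imp_def by blast+

lemma le_f_g: "y \<in> pcar B \<Longrightarrow> B.le y (f (g y))"
  using galois by simp

lemma qval_f_bounds: "G \<in> specM B \<Longrightarrow> x \<in> pcar A \<Longrightarrow> 0 \<le> qval B G (f x) \<and> qval B G (f x) \<le> 1"
  using B.qval_bounds by simp

lemma qval_f_one: "G \<in> specM B \<Longrightarrow> qval B G (f A.one) = 1"
proof -
  assume G: "G \<in> specM B"
  have one: "A.one \<in> pcar A" "B.one \<in> pcar B" by simp_all
  have "B.le B.one (f A.one)" using galois[OF one] by simp
  hence "1 \<le> qval B G (f A.one)" using B.qval_mono[OF G one(2) f_in[OF one(1)]] B.qval_one[OF G] by simp
  thus ?thesis using qval_f_bounds[OF G, of A.one] by simp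
qed

lemma qval_f_mul_const: "G \<in> specM B \<Longrightarrow> x \<in> pcar A \<Longrightarrow> rat01 r \<Longrightarrow>
   std_mult (qval B G (f x)) (of_rat r) \<le> qval B G (f (A.mul x (A.c r)))"
proof -
  assume G: "G \<in> specM B" and x: "x \<in> pcar A" and r: "rat01 r"
  have "A.le x (A.imp (A.c r) (A.mul x (A.c r)))" using A.residuation[of x "A.c r" "A.mul x (A.c r)"] x r by simp
  hence "B.le (f x) (B.imp (B.c r) (f (A.mul x (A.c r))))" using f_mono f_imp_const x r by simp
  hence "qval B G (f x) \<le> qval B G (B.imp (B.c r) (f (A.mul x (A.c r))))"
    using B.qval_mono[OF G] x r by simp
  hence "qval B G (f x) \<le> std_imp (of_rat r) (qval B G (f (A.mul x (A.c r))))"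
    using B.qval_imp[OF G] B.qval_const[OF G] x r by simp
  thus ?thesis using qval_f_bounds[OF G, of "A.mul x (A.c r)"] x r by (simp add: std_imp_def std_mult_def)
qed

text \<open>As a right adjoint, \<open>f\<close> preserves meets; semisimplicity makes this visible pointwise.\<close>
lemma qval_f_meet: "G \<in> specM B \<Longrightarrow> a \<in> pcar A \<Longrightarrow> b \<in> pcar A \<Longrightarrow>
   min (qval B G (f a)) (qval B G (f b)) \<le> qval B G (f (A.meet a b))"
proof -
  assume G: "G \<in> specM B" and a: "a \<in> pcar A" and b: "b \<in> pcar A"
  let ?w = "B.meet (f a) (f b)"
  have "B.le ?w (f a)" "B.le ?w (f b)" using B.le_iff_qval_le B.qval_meet a b by auto
  hence "A.le (g ?w) a" "A.le (g ?w) b" using galois a b by auto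
  hence "A.le (g ?w) (A.meet a b)" using A.le_iff_qval_le A.qval_meet a b by auto
  hence "B.le ?w (f (A.meet a b))" using galois a b by simp
  hence "qval B G ?w \<le> qval B G (f (A.meet a b))" using B.qval_mono[OF G] a b by simp
  thus ?thesis using B.qval_meet[OF G] a b by simp
qed

lemma qval_f_meets: "G \<in> specM B \<Longrightarrow> set bs \<subseteq> pcar A \<Longrightarrow> \<forall>b\<in>set bs. t < qval B G (f b) \<Longrightarrow> t < 1 \<Longrightarrow>
   t < qval B G (f (A.meets bs))"
proof (induct bs)
  case Nil thus ?case using qval_f_one by (simp add: A.meets_def)
next
  case (Cons b bs)
  thus ?case using qval_f_meet[OF Cons.prems(1), of b "A.meets bs"] A.meets_in[of bs]
    by (fastforce simp: A.meets_def)
qed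

lemma qval_shift_up:
  assumes "F \<in> specM A" "a \<in> pcar A" "0 \<le> q" "q \<le> 1"
  shows "qval A F (A.imp (A.c (1 - q)) a) = trunc01 (qval A F a + of_rat q)"
proof -
  have "rat01 (1 - q)" using assms by (simp add: rat01_def)
  thus ?thesis using A.qval_imp A.qval_const A.qval_bounds assms
    by (simp add: std_imp_def of_rat_diff trunc01_def)
qed

lemma qval_f_shift_up:
  assumes "G \<in> specM B" "a \<in> pcar A" "0 \<le> q" "q \<le> 1"
  shows "qval B G (f (A.imp (A.c (1 - q)) a)) = trunc01 (qval B G (f a) + of_rat q)"
proof -
  have r: "rat01 (1 - q)" using assms by (simp add: rat01_def)
  thus ?thesis using f_imp_const[OF assms(2) r, symmetric] B.qval_imp B.qval_const qval_f_bounds assms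
    by (simp add: std_imp_def of_rat_diff trunc01_def)
qed

lemma qval_shift_down:
  assumes F: "F \<in> specM A" and a: "a \<in> pcar A" and q: "-1 \<le> q" "q < 0"
  shows "qval A F (A.mul a (A.c (1 + q))) = trunc01 (qval A F a + of_rat q)"
proof -
  have r: "rat01 (1 + q)" using q by (simp add: rat01_def)
  have "qval A F (A.mul a (A.c (1 + q))) = max 0 (qval A F a + of_rat q)"
    using A.qval_mul[OF F] A.qval_const[OF F r] a r by (simp add: std_mult_def of_rat_add)
  moreover have "real_of_rat q < 0" using q(2) by simp
  hence "qval A F a + of_rat q \<le> 1" using A.qval_bounds[OF F a] by linarith
  ultimately show ?thesis by (simp add: trunc01_def)
qed

lemma qval_f_shift_down:
  assumes G: "G \<in> specM B" and a: "a \<in> pcar A" and q: "-1 \<le> q" "q < 0"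
  shows "trunc01 (qval B G (f a) + of_rat q) \<le> qval B G (f (A.mul a (A.c (1 + q))))"
proof -
  have r: "rat01 (1 + q)" using q by (simp add: rat01_def)
  have "max 0 (qval B G (f a) + of_rat q) \<le> qval B G (f (A.mul a (A.c (1 + q))))"
    using qval_f_mul_const[OF G a r] by (simp add: std_mult_def of_rat_add)
  moreover have "real_of_rat q < 0" using q(2) by simp
  hence "qval B G (f a) + of_rat q \<le> 1" using qval_f_bounds[OF G a] by linarith
  ultimately show ?thesis by (simp add: trunc01_def)
qed

lemma shift_between:
  assumes a: "a \<in> pcar A" and lo: "-1 \<le> lo" "lo < hi" "hi \<le> 1"
  shows "\<exists>b\<in>pcar A. \<exists>s. lo < s \<and> s < hi \<and>
    (\<forall>F\<in>specM A. qval A F b = trunc01 (qval A F a + s)) \<and>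
    (\<forall>G\<in>specM B. trunc01 (qval B G (f a) + s) \<le> qval B G (f b))"
proof -
  obtain q where q: "lo < of_rat q" "of_rat q < hi" using of_rat_dense[OF lo(2)] by blast
  hence "-1 \<le> real_of_rat q" "real_of_rat q \<le> 1" using lo by linarith+
  hence q1: "-1 \<le> q" "q \<le> 1" by (metis of_rat_less_eq of_rat_neg_one, simp)
  show ?thesis
  proof (cases "0 \<le> q")
    case True
    have "rat01 (1 - q)" using True q1 by (simp add: rat01_def)
    thus ?thesis using q a True q1 qval_shift_up qval_f_shift_up
      by (intro bexI[of _ "A.imp (A.c (1 - q)) a"] exI[of _ "of_rat q"]) auto
  next
    case False
    have "rat01 (1 + q)" using False q1 by (simp add: rat01_def)
    thus ?thesis using q a False q1 qval_shift_down qval_f_shift_down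
      by (intro bexI[of _ "A.mul a (A.c (1 + q))"] exI[of _ "of_rat q"]) auto
  qed
qed

definition rel where "rel F G = inf01 ((\<lambda>a. std_imp (qval B G (f a)) (qval A F a)) ` pcar A)"

context
  fixes F G assumes F: "F \<in> specM A" and G: "G \<in> specM B"
begin

lemma std_imp_qval_f_in_01: "a \<in> pcar A \<Longrightarrow> std_imp (qval B G (f a)) (qval A F a) \<in> {0..1}"
  using A.qval_bounds[OF F] qval_f_bounds[OF G] by (intro std_imp_in_01) auto

lemma rel_in_01: "rel F G \<in> {0..1}"
  unfolding rel_def using std_imp_qval_f_in_01 by (intro inf01_in_01) blast

lemma rel_le: "a \<in> pcar A \<Longrightarrow> rel F G \<le> std_imp (qval B G (f a)) (qval A F a)"
  unfolding rel_def using std_imp_qval_f_in_01 by (intro inf01_lower) auto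

lemma rel_gap: "rel F G < 1 - d \<Longrightarrow> \<exists>a\<in>pcar A. d < qval B G (f a) - qval A F a"
proof (cases "d < 0")
  case True
  have "qval A F (pcst A 0) = 0" using A.qval_const[OF F, of 0] by simp
  moreover have "0 \<le> qval B G (f (pcst A 0))" using qval_f_bounds[OF G, of "pcst A 0"] by simp
  ultimately show ?thesis using True A.zero_in by (intro bexI[of _ "pcst A 0"]) auto
next
  case False
  assume lt: "rel F G < 1 - d"
  have ne: "pcar A \<noteq> {}" using A.zero_in by blast
  have nn: "\<forall>a\<in>pcar A. 0 \<le> std_imp (qval B G (f a)) (qval A F a)"
    using std_imp_qval_f_in_01 by simp
  obtain a where a: "a \<in> pcar A" "std_imp (qval B G (f a)) (qval A F a) < 1 - d"
    using inf01_less[OF ne nn lt[unfolded rel_def]] by blast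
  thus ?thesis using False by (intro bexI[of _ a]) (auto simp: std_imp_def min_def split: if_splits)
qed

text \<open>Elements small at \<open>F\<close> whose images are large at \<open>G\<close>, obtained by shifting an element
  that realizes the gap in the infimum defining \<open>rel F G\<close>.\<close>

lemma f_witness:
  assumes x: "x \<in> pcar A" and t: "qval B G (f x) < t" "t < std_imp (rel F G) (qval A F x)"
  shows "\<exists>b\<in>pcar A. 1 - t + qval B G (f x) < qval B G (f b) \<and> qval A F b < std_imp t (qval A F x)"
proof -
  define c where "c = qval B G (f x)"
  define v where "v = qval A F x"
  have c: "0 \<le> c" "c \<le> 1" and v: "0 \<le> v" "v \<le> 1" and R: "0 \<le> rel F G" "rel F G \<le> 1"
    using qval_f_bounds[OF G x] A.qval_bounds[OF F x] rel_in_01 by (auto simp: c_def v_def)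
  have t1: "t < 1" and "rel F G < 1 - (t - v)" using t R by (auto simp: std_imp_def v_def)
  hence "rel F G < 1 - max (c - t) (t - v)" using R t(1) by (simp add: c_def)
  then obtain a where a: "a \<in> pcar A" "max (c - t) (t - v) < qval B G (f a) - qval A F a"
    using rel_gap by blast
  define u where "u = qval B G (f a)"
  define w where "w = qval A F a"
  have u: "0 \<le> u" "u \<le> 1" and w: "0 \<le> w" "w \<le> 1"
    using qval_f_bounds[OF G a(1)] A.qval_bounds[OF F a(1)] by (auto simp: u_def w_def)
  have "-1 \<le> 1 - t + c - u" "1 - t + c - u < std_imp t v - w" "std_imp t v - w \<le> 1"
    using a(2) c u w t1 t(1) by (auto simp: u_def w_def c_def std_imp_def min_def)
  then obtain b s where b: "b \<in> pcar A" "1 - t + c - u < s" "s < std_imp t v - w"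
    "qval A F b = trunc01 (w + s)" "trunc01 (u + s) \<le> qval B G (f b)"
    using shift_between[OF a(1)] F G unfolding u_def w_def by blast
  have "1 - t + c < qval B G (f b)" using b(2,5) t(1) by (auto simp: trunc01_def c_def)
  moreover have "qval A F b < std_imp t v" using b(3,4) v t1 by (auto simp: trunc01_def std_imp_def)
  ultimately show ?thesis using b(1) by (auto simp: c_def v_def)
qed

lemma g_witness:
  assumes y: "y \<in> pcar B" and e: "0 < e" and t: "std_mult (rel F G) (qval B G y) < t" "t \<le> 1"
  shows "\<exists>b\<in>pcar A. qval A F b \<le> t \<and> max 0 (qval B G y - e) < qval B G (f b)"
proof -
  define w0 where "w0 = qval B G y"
  have w0: "0 \<le> w0" "w0 \<le> 1" and R: "0 \<le> rel F G" "rel F G \<le> 1"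
    using B.qval_bounds[OF G y] rel_in_01 by (auto simp: w0_def)
  have t0: "0 < t" and "rel F G < 1 - (w0 - t - e)" using t e by (auto simp: std_mult_def w0_def)
  hence "rel F G < 1 - max (- t) (w0 - t - e)" using R by simp
  then obtain a where a: "a \<in> pcar A" "max (- t) (w0 - t - e) < qval B G (f a) - qval A F a"
    using rel_gap by blast
  define u where "u = qval B G (f a)"
  define w where "w = qval A F a"
  have u: "0 \<le> u" "u \<le> 1" and w: "0 \<le> w" "w \<le> 1"
    using qval_f_bounds[OF G a(1)] A.qval_bounds[OF F a(1)] by (auto simp: u_def w_def)
  have "-1 \<le> max 0 (w0 - e) - u" "max 0 (w0 - e) - u < t - w" "t - w \<le> 1"
    using a(2) u w t(2) by (auto simp: u_def w_def)
  then obtain b s where b: "b \<in> pcar A" "max 0 (w0 - e) - u < s" "s < t - w"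
    "qval A F b = trunc01 (w + s)" "trunc01 (u + s) \<le> qval B G (f b)"
    using shift_between[OF a(1)] F G unfolding u_def w_def by blast
  have "qval A F b \<le> t" using b(3,4) t0 by (auto simp: trunc01_def)
  moreover have "max 0 (w0 - e) < qval B G (f b)" using b(2,5) w0 e by (auto simp: trunc01_def)
  ultimately show ?thesis using b(1) by (auto simp: w0_def)
qed

end

lemma std_imp_rel_in_01: "F \<in> specM A \<Longrightarrow> G \<in> specM B \<Longrightarrow> x \<in> pcar A \<Longrightarrow>
    std_imp (rel F G) (qval A F x) \<in> {0..1}"
  using rel_in_01 A.qval_bounds by (intro std_imp_in_01) auto

lemma le_f_joins_of_cover:
  assumes X: "X \<subseteq> pcar A" and y: "y \<in> pcar B"
    and cover: "\<forall>G\<in>specM B. \<exists>b\<in>X. qval B G y < qval B G (f b)"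
  shows "\<exists>bs. set bs \<subseteq> X \<and> B.le y (f (A.joins bs))"
proof -
  have "f ` X \<subseteq> pcar B" using X by auto
  then obtain bs where bs: "set bs \<subseteq> X" "\<forall>G\<in>specM B. \<exists>b\<in>set bs. qval B G y < qval B G (f b)"
    using B.finite_cover_above[OF _ y cover] by blast
  have bsA: "set bs \<subseteq> pcar A" using bs(1) X by auto
  let ?m = "A.joins bs"
  have m: "?m \<in> pcar A" using A.joins_in[OF bsA] .
  have "qval B G y \<le> qval B G (f ?m)" if G: "G \<in> specM B" for G
  proof -
    obtain b where b: "b \<in> set bs" "qval B G y < qval B G (f b)" using bs(2) G by blast
    have bA: "b \<in> pcar A" using b(1) bsA by auto
    have "B.le (f b) (f ?m)" using f_mono[OF bA m] A.le_joins[OF bsA b(1)] by simp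
    hence "qval B G (f b) \<le> qval B G (f ?m)" using B.qval_mono[OF G] bA m by simp
    thus ?thesis using b(2) by simp
  qed
  thus ?thesis using B.le_iff_qval_le y m bs(1) by auto
qed

lemma qval_f_le_inf:
  assumes x: "x \<in> pcar A" and G: "G \<in> specM B"
  shows "qval B G (f x) \<le> inf01 ((\<lambda>F. std_imp (rel F G) (qval A F x)) ` specM A)"
proof (rule inf01_greatest)
  show "\<forall>F\<in>specM A. qval B G (f x) \<le> std_imp (rel F G) (qval A F x)"
  proof
    fix F assume F: "F \<in> specM A"
    show "qval B G (f x) \<le> std_imp (rel F G) (qval A F x)"
      using rel_le[OF F G x] rel_in_01[OF F G] qval_f_bounds[OF G x] A.qval_bounds[OF F x]
      by (auto simp: std_imp_def min_def split: if_splits)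
  qed
qed (use qval_f_bounds[OF G x] in simp)

lemma inf_le_qval_f:
  assumes x: "x \<in> pcar A" and G: "G \<in> specM B"
  shows "inf01 ((\<lambda>F. std_imp (rel F G) (qval A F x)) ` specM A) \<le> qval B G (f x)"
    (is "inf01 (?h ` _) \<le> ?c")
proof (rule ccontr)
  assume "\<not> ?thesis"
  hence "?c < inf01 (?h ` specM A)" by simp
  then obtain \<tau> where \<tau>: "?c < of_rat \<tau>" "of_rat \<tau> < inf01 (?h ` specM A)" using of_rat_dense by blast
  have h01: "\<forall>F\<in>specM A. ?h F \<in> {0..1}" using std_imp_rel_in_01 G x by blast
  hence "inf01 (?h ` specM A) \<le> 1" using inf01_in_01[OF h01] by simp
  hence "0 \<le> real_of_rat \<tau>" "real_of_rat \<tau> \<le> 1" using \<tau> qval_f_bounds[OF G x] by linarith+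
  hence r: "rat01 \<tau>" by (simp add: rat01_def)
  let ?y = "A.imp (A.c \<tau>) x"
  have y: "?y \<in> pcar A" using x r by simp
  let ?X = "{b \<in> pcar A. 1 - of_rat \<tau> + ?c < qval B G (f b)}"
  have cover: "\<forall>F\<in>specM A. \<exists>b\<in>?X. qval A F b < qval A F ?y"
  proof
    fix F assume F: "F \<in> specM A"
    have "inf01 (?h ` specM A) \<le> ?h F" using inf01_lower[OF F, of ?h] h01 by simp
    hence "of_rat \<tau> < ?h F" using \<tau>(2) by linarith
    then obtain b where b: "b \<in> pcar A" "1 - of_rat \<tau> + ?c < qval B G (f b)"
      "qval A F b < std_imp (of_rat \<tau>) (qval A F x)"
      using f_witness[OF F G x \<tau>(1)] by blast
    moreover have "qval A F ?y = std_imp (of_rat \<tau>) (qval A F x)"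
      using A.qval_imp[OF F] A.qval_const[OF F r] x r by simp
    ultimately have "qval A F b < qval A F ?y" by simp
    thus "\<exists>b\<in>?X. qval A F b < qval A F ?y" using b(1,2) by blast
  qed
  obtain bs where bs: "set bs \<subseteq> ?X" "A.le (A.meets bs) ?y"
    using A.meets_le_of_cover[OF _ y cover] by blast
  have bsA: "set bs \<subseteq> pcar A" using bs(1) by auto
  let ?m = "A.meets bs"
  have m: "?m \<in> pcar A" using A.meets_in[OF bsA] .
  have "\<forall>b\<in>set bs. 1 - of_rat \<tau> + ?c < qval B G (f b)" using bs(1) by auto
  hence "1 - of_rat \<tau> + ?c < qval B G (f ?m)" using qval_f_meets[OF G bsA] \<tau>(1) by simp
  also have "\<dots> \<le> qval B G (B.imp (B.c \<tau>) (f x))"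
    using B.qval_mono[OF G] f_mono[OF m y bs(2)] f_imp_const[OF x r] m y by simp
  also have "\<dots> = 1 - of_rat \<tau> + ?c"
    using B.qval_imp[OF G] B.qval_const[OF G r] \<tau>(1) x r by (simp add: std_imp_def)
  finally show False by simp
qed

lemma sup_le_qval_g:
  assumes y: "y \<in> pcar B" and F: "F \<in> specM A"
  shows "sup01 ((\<lambda>G. std_mult (rel F G) (qval B G y)) ` specM B) \<le> qval A F (g y)"
proof (rule sup01_least)
  show "\<forall>G\<in>specM B. std_mult (rel F G) (qval B G y) \<le> qval A F (g y)"
  proof
    fix G assume G: "G \<in> specM B"
    have "rel F G \<le> std_imp (qval B G (f (g y))) (qval A F (g y))" using rel_le[OF F G] y by simp
    moreover have "qval B G y \<le> qval B G (f (g y))" using B.qval_mono[OF G] le_f_g y by simp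
    ultimately show "std_mult (rel F G) (qval B G y) \<le> qval A F (g y)"
      using B.qval_bounds[OF G y] A.qval_bounds[OF F, of "g y"] y
      by (auto simp: std_mult_def std_imp_def min_def split: if_splits)
  qed
qed (use A.qval_bounds[OF F, of "g y"] y in simp)

lemma qval_g_le_sup:
  assumes y: "y \<in> pcar B" and F: "F \<in> specM A"
  shows "qval A F (g y) \<le> sup01 ((\<lambda>G. std_mult (rel F G) (qval B G y)) ` specM B)"
    (is "?d \<le> sup01 (?h ` _)")
proof (rule ccontr)
  assume "\<not> ?thesis"
  hence "sup01 (?h ` specM B) < ?d" by simp
  then obtain \<tau> where \<tau>: "sup01 (?h ` specM B) < of_rat \<tau>" "of_rat \<tau> < ?d" using of_rat_dense by blast
  have "0 < ?d - of_rat \<tau>" using \<tau>(2) by simp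
  then obtain \<epsilon> where \<epsilon>: "0 < (of_rat \<epsilon> :: real)" "of_rat \<epsilon> < ?d - of_rat \<tau>" using of_rat_dense by blast
  have "?h G \<in> {0..1}" if G: "G \<in> specM B" for G
    using rel_in_01[OF F G] B.qval_bounds[OF G y] by (intro std_mult_in_01) auto
  hence h01: "\<forall>G\<in>specM B. ?h G \<in> {0..1}" by blast
  have "0 \<le> sup01 (?h ` specM B)" using sup01_in_01[OF h01] by simp
  moreover have "real_of_rat (1 - \<epsilon>) = 1 - real_of_rat \<epsilon>" by (simp add: of_rat_diff)
  ultimately have "0 \<le> real_of_rat \<tau>" "real_of_rat \<tau> \<le> 1" "0 \<le> real_of_rat (1 - \<epsilon>)" "real_of_rat (1 - \<epsilon>) \<le> 1"
    using \<tau> \<epsilon> A.qval_bounds[OF F g_in[OF y]] by linarith+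
  hence r: "rat01 \<tau>" "rat01 (1 - \<epsilon>)" by (simp_all add: rat01_def)
  let ?y = "B.mul y (B.c (1 - \<epsilon>))"
  have y': "?y \<in> pcar B" using y r by simp
  let ?X = "{b \<in> pcar A. qval A F b \<le> of_rat \<tau>}"
  have cover: "\<forall>G\<in>specM B. \<exists>b\<in>?X. qval B G ?y < qval B G (f b)"
  proof
    fix G assume G: "G \<in> specM B"
    have "?h G \<le> sup01 (?h ` specM B)" using sup01_upper[OF G, of ?h] h01 by simp
    hence lt: "?h G < of_rat \<tau>" using \<tau>(1) by linarith
    have "of_rat \<tau> \<le> (1::real)" using r(1) by (simp add: rat01_def)
    then obtain b where b: "b \<in> pcar A" "qval A F b \<le> of_rat \<tau>"
      "max 0 (qval B G y - of_rat \<epsilon>) < qval B G (f b)"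
      using g_witness[OF F G y \<epsilon>(1) lt] by blast
    moreover have "qval B G ?y = max 0 (qval B G y - of_rat \<epsilon>)"
      using B.qval_mul[OF G] B.qval_const[OF G r(2)] y r by (simp add: std_mult_def of_rat_diff)
    ultimately have "qval B G ?y < qval B G (f b)" by simp
    thus "\<exists>b\<in>?X. qval B G ?y < qval B G (f b)" using b(1,2) by blast
  qed
  obtain bs where bs: "set bs \<subseteq> ?X" "B.le ?y (f (A.joins bs))"
    using le_f_joins_of_cover[OF _ y' cover] by blast
  have bsA: "set bs \<subseteq> pcar A" using bs(1) by auto
  let ?m = "A.joins bs"
  have m: "?m \<in> pcar A" using A.joins_in[OF bsA] .
  have "B.le y (f (A.imp (A.c (1 - \<epsilon>)) ?m))"
    using bs(2) B.residuation[of y] f_imp_const[OF m r(2)] y r m by simp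
  hence "A.le (g y) (A.imp (A.c (1 - \<epsilon>)) ?m)" using galois y m r by simp
  hence "?d \<le> qval A F (A.imp (A.c (1 - \<epsilon>)) ?m)" using A.qval_mono[OF F] y m r by simp
  also have "\<dots> = std_imp (1 - of_rat \<epsilon>) (qval A F ?m)"
    using A.qval_imp[OF F] A.qval_const[OF F r(2)] m r by (simp add: of_rat_diff)
  also have "\<dots> \<le> of_rat \<epsilon> + of_rat \<tau>"
  proof -
    have "\<forall>b\<in>set bs. qval A F b \<le> of_rat \<tau>" using bs(1) by auto
    hence "qval A F ?m \<le> of_rat \<tau>" using A.qval_joins_le[OF F bsA] r(1) by (simp add: rat01_def)
    thus ?thesis by (simp add: std_imp_def)
  qed
  finally show False using \<epsilon> by simp
qed

lemma nat_emb_f: "x \<in> pcar A \<Longrightarrow> nat_emb B (f x) = fR (specM A) (specM B) rel (nat_emb A x)"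
  unfolding nat_emb_def fR_def
  by (intro restrict_ext) (simp add: order.antisym qval_f_le_inf inf_le_qval_f cong: image_cong)

lemma nat_emb_g: "y \<in> pcar B \<Longrightarrow> nat_emb A (g y) = gR (specM A) (specM B) rel (nat_emb B y)"
  unfolding nat_emb_def gR_def
  by (intro restrict_ext) (simp add: order.antisym sup_le_qval_g qval_g_le_sup cong: image_cong)

end

theorem theorem6:
  shows "(\<forall>(I::'i set) (J::'j set) (R::'i \<Rightarrow> 'j \<Rightarrow> real).
            (\<forall>i\<in>I. \<forall>j\<in>J. R i j \<in> {0..1}) \<longrightarrow>
            strong_ladj (power_pav I) (power_pav J) (fR I J R) (gR I J R))
       \<and> (\<forall>(A::'a pav) (B::'b pav) f g.
            pavelka A \<and> pavelka B \<and>
            semisimple TYPE('ia) TYPE('ca) A \<and> semisimple TYPE('ib) TYPE('cb) B \<and>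
            strong_ladj A B f g \<longrightarrow>
            (\<exists>R::'a set \<Rightarrow> 'b set \<Rightarrow> real.
               (\<forall>F\<in>specM A. \<forall>G\<in>specM B.
                  R F G = inf01 ((\<lambda>a. std_imp (qval B G (f a)) (qval A F a)) ` pcar A)) \<and>
               (\<forall>F\<in>specM A. \<forall>G\<in>specM B. R F G \<in> {0..1}) \<and>
               (\<forall>x\<in>pcar A. nat_emb B (f x) = fR (specM A) (specM B) R (nat_emb A x)) \<and>
               (\<forall>y\<in>pcar B. nat_emb A (g y) = gR (specM A) (specM B) R (nat_emb B y))))"
proof (intro conjI allI impI)
  fix I :: "'i set" and J :: "'j set" and R :: "'i \<Rightarrow> 'j \<Rightarrow> real"
  assume "\<forall>i\<in>I. \<forall>j\<in>J. R i j \<in> {0..1}"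
  thus "strong_ladj (power_pav I) (power_pav J) (fR I J R) (gR I J R)" by (rule strong_ladj_fR_gR)
next
  fix A :: "'a pav" and B :: "'b pav" and f g
  assume h: "pavelka A \<and> pavelka B \<and> semisimple TYPE('ia) TYPE('ca) A \<and>
    semisimple TYPE('ib) TYPE('cb) B \<and> strong_ladj A B f g"
  interpret A: pav_alg A using h by unfold_locales simp
  interpret B: pav_alg B using h by unfold_locales simp
  have ss: "semisimple TYPE('ia) TYPE('ca) A" "semisimple TYPE('ib) TYPE('cb) B" using h by simp_all
  interpret pav_adjunction A B f g
    using h A.semisimple_imp_ss_pav[OF ss(1)] B.semisimple_imp_ss_pav[OF ss(2)]
    by (simp add: pav_adjunction_def pav_adjunction_axioms_def)
  show "\<exists>R. (\<forall>F\<in>specM A. \<forall>G\<in>specM B.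
                R F G = inf01 ((\<lambda>a. std_imp (qval B G (f a)) (qval A F a)) ` pcar A)) \<and>
             (\<forall>F\<in>specM A. \<forall>G\<in>specM B. R F G \<in> {0..1}) \<and>
             (\<forall>x\<in>pcar A. nat_emb B (f x) = fR (specM A) (specM B) R (nat_emb A x)) \<and>
             (\<forall>y\<in>pcar B. nat_emb A (g y) = gR (specM A) (specM B) R (nat_emb B y))"
    using rel_in_01 nat_emb_f nat_emb_g by (intro exI[of _ rel]) (simp add: rel_def)
qed

end
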